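(* Let $d\ge3$, $k,j\ge1$ and $C>0$. There exist $C'>0$ and a function $\epsilon:\mathbb N\to[0,1]$ with $\epsilon(N)\to0$ as $N\to\infty$, both depending only on $d,k,j,C$, such that the following holds. For every finite graph $G$ with all vertex degrees in $[3,d]$, $N$ vertices and girth $g\ge C\log N$, the probability (over the random labeling $\alpha$) that $\mu^\bullet_{G,\alpha}$ fails to effectively simulate $\mu^\bullet_X$ up to time $C'\log N$ is at most $\epsilon(N)$.
   Context: $\Gamma$ is the free group on a symmetric generating set $S$ of size $2k$, $X=\mathrm{Cay}(\Gamma,S)$ (a $2k$-regular tree), $\mu_X$ the standard random walk $\mu_X(x\to xs)=\frac1{2k}$, $\mu_X^n$ its convolution powers. $G=(V,E)$ finite graph, $\mu_G$ the standard random walk on $G$ (move to a uniform neighbour), $\nu_G(u)=\deg(u)/2|E|$ its stationary measure, and $\mu_G^q$ its $q$-step walk; for an oriented path $\vec p$ of length $q$ starting at $p_0$, $\mu_G^q(\vec p)$ is its probability under the walk started at $p_0$. The random labeling $\alpha$: for each edge independently, one orientation receives a uniformly random element of $S^j$ (a word of length $j$ in $S$, viewed in $\Gamma$) and the opposite orientation its inverse; for an oriented path $\vec p$, $\alpha(\vec p)$ is the product of labels along it. For $u,v$ with $d_G(u,v)<g/2$ and $x\in X$, $\beta_{u\to x}(v)=x\alpha(\vec p)$ with $\vec p$ the unique shortest path from $u$ to $v$. For $1\le q<g/2$: $\mu^q_{G,\alpha}(x\to x')=\sum_{\vec p}\nu_G(p_0)\mu_G^q(\vec p)\mathbf 1(x\alpha(\vec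 p)=x')$, the sum over oriented paths of length $q$ in $G$ (equivalently $\sum_u\nu_G(u)(\beta_{u\to x})_*\mu_G^q(u\to\cdot)$), and $\bar\mu^q(x\to x')$ is its expectation over $\alpha$. $\mu^\bullet_{G,\alpha}$ effectively simulates $\mu^\bullet_X$ up to time $q_0$ if $\mu^q_{G,\alpha}(x\to x')\ge\frac12\bar\mu^q(x\to x')$ for all integers $1\le q\le q_0$ and all $x,x'\in X$, and $\mu^1_{G,\alpha}(x\to x')\le2\mu_X^j(x\to x')$ for all $x,x'$. *)

theory Defs
  imports Complex_Main "HOL-Library.FuncSet"
begin

type_synonym letter = "nat \<times> bool"

text \<open>Generator i is (i,True), its inverse is (i,False); S = gens k has size 2k.\<close>
definition gens :: "nat \<Rightarrow> letter set" where
  "gens k = {(i, b). i < k}"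

fun linv :: "letter \<Rightarrow> letter" where
  "linv (i, b) = (i, \<not> b)"

definition winv :: "letter list \<Rightarrow> letter list" where
  "winv w = rev (map linv w)"

fun red :: "letter list \<Rightarrow> letter list" where
  "red [] = []"
| "red (a # w) = (case red w of [] \<Rightarrow> [a]
                  | b # w' \<Rightarrow> (if b = linv a then w' else a # b # w'))"

definition reduced :: "letter list \<Rightarrow> bool" where
  "reduced w = (\<forall>i. Suc i < length w \<longrightarrow> w ! Suc i \<noteq> linv (w ! i))"

text \<open>Elements of the free group Gamma (= vertices of the tree X).\<close>
definition FG :: "nat \<Rightarrow> letter list set" where
  "FG k = {w. set w \<subseteq> gens k \<and> reduced w}"

definition words :: "nat \<Rightarrow> nat \<Rightarrow> letter list set" where
  "words k j = {w. length w = j \<and> set w \<subseteq> gens k}"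

text \<open>j-step simple random walk on the Cayley tree: mu_X^j(x -> x').\<close>
definition muX :: "nat \<Rightarrow> nat \<Rightarrow> letter list \<Rightarrow> letter list \<Rightarrow> real" where
  "muX k j x x' = real (card {w \<in> words k j. red (x @ w) = x'}) / (2 * real k) ^ j"

definition simple_graph :: "nat set \<Rightarrow> (nat \<Rightarrow> nat \<Rightarrow> bool) \<Rightarrow> bool" where
  "simple_graph V E = (finite V \<and> (\<forall>u v. E u v \<longrightarrow> u \<in> V \<and> v \<in> V \<and> u \<noteq> v \<and> E v u))"

definition deg :: "nat set \<Rightarrow> (nat \<Rightarrow> nat \<Rightarrow> bool) \<Rightarrow> nat \<Rightarrow> nat" where
  "deg V E u = card {v \<in> V. E u v}"

text \<open>Edges, each represented once by its orientation (u,v) with u < v.\<close>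
definition oedges :: "nat set \<Rightarrow> (nat \<Rightarrow> nat \<Rightarrow> bool) \<Rightarrow> (nat \<times> nat) set" where
  "oedges V E = {(u, v). u \<in> V \<and> v \<in> V \<and> E u v \<and> u < v}"

definition is_cycle :: "nat set \<Rightarrow> (nat \<Rightarrow> nat \<Rightarrow> bool) \<Rightarrow> nat list \<Rightarrow> bool" where
  "is_cycle V E c = (3 \<le> length c \<and> distinct c \<and> set c \<subseteq> V \<and>
     (\<forall>i. Suc i < length c \<longrightarrow> E (c ! i) (c ! Suc i)) \<and> E (last c) (hd c))"

definition girth :: "nat set \<Rightarrow> (nat \<Rightarrow> nat \<Rightarrow> bool) \<Rightarrow> nat" where
  "girth V E = (LEAST n. \<exists>c. is_cycle V E c \<and> length c = n)"

text \<open>Oriented walks (paths of the random walk, backtracking allowed) of length q,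
  as vertex lists of length q+1.\<close>
definition walks :: "nat set \<Rightarrow> (nat \<Rightarrow> nat \<Rightarrow> bool) \<Rightarrow> nat \<Rightarrow> nat list set" where
  "walks V E q = {p. length p = Suc q \<and> set p \<subseteq> V \<and> (\<forall>i<q. E (p ! i) (p ! Suc i))}"

text \<open>nu_G(p_0) * mu_G^q(p) for a walk p of length q.\<close>
definition walk_weight :: "nat set \<Rightarrow> (nat \<Rightarrow> nat \<Rightarrow> bool) \<Rightarrow> nat list \<Rightarrow> real" where
  "walk_weight V E p =
     (real (deg V E (p ! 0)) / (2 * real (card (oedges V E)))) *
     (\<Prod>i<length p - 1. 1 / real (deg V E (p ! i)))"

text \<open>A labeling assigns to each edge, in its orientation u<v, a word in S^j; the opposite
  orientation gets the inverse. The sample space (uniform measure) is:\<close>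
definition labelings :: "nat \<Rightarrow> nat \<Rightarrow> nat set \<Rightarrow> (nat \<Rightarrow> nat \<Rightarrow> bool) \<Rightarrow>
    (nat \<times> nat \<Rightarrow> letter list) set" where
  "labelings k j V E = PiE (oedges V E) (\<lambda>_. words k j)"

definition elab :: "(nat \<times> nat \<Rightarrow> letter list) \<Rightarrow> nat \<Rightarrow> nat \<Rightarrow> letter list" where
  "elab \<alpha> u v = (if u < v then \<alpha> (u, v) else winv (\<alpha> (v, u)))"

definition plab :: "(nat \<times> nat \<Rightarrow> letter list) \<Rightarrow> nat list \<Rightarrow> letter list" where
  "plab \<alpha> p = concat (map (\<lambda>i. elab \<alpha> (p ! i) (p ! Suc i)) [0..<length p - 1])"

definition muGa :: "nat set \<Rightarrow> (nat \<Rightarrow> nat \<Rightarrow> bool) \<Rightarrow> (nat \<times> nat \<Rightarrow> letter list) \<Rightarrow>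
    nat \<Rightarrow> letter list \<Rightarrow> letter list \<Rightarrow> real" where
  "muGa V E \<alpha> q x x' =
     (\<Sum>p\<in>walks V E q. walk_weight V E p * (if red (x @ plab \<alpha> p) = x' then 1 else 0))"

definition mubar :: "nat \<Rightarrow> nat \<Rightarrow> nat set \<Rightarrow> (nat \<Rightarrow> nat \<Rightarrow> bool) \<Rightarrow>
    nat \<Rightarrow> letter list \<Rightarrow> letter list \<Rightarrow> real" where
  "mubar k j V E q x x' =
     (\<Sum>\<alpha>\<in>labelings k j V E. muGa V E \<alpha> q x x') / real (card (labelings k j V E))"

definition eff_sim :: "nat \<Rightarrow> nat \<Rightarrow> nat set \<Rightarrow> (nat \<Rightarrow> nat \<Rightarrow> bool) \<Rightarrow>
    (nat \<times> nat \<Rightarrow> letter list) \<Rightarrow> real \<Rightarrow> bool" where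
  "eff_sim k j V E \<alpha> q0 =
     ((\<forall>q::nat. 1 \<le> q \<and> real q \<le> q0 \<longrightarrow>
        (\<forall>x\<in>FG k. \<forall>x'\<in>FG k. muGa V E \<alpha> q x x' \<ge> mubar k j V E q x x' / 2)) \<and>
      (\<forall>x\<in>FG k. \<forall>x'\<in>FG k. muGa V E \<alpha> 1 x x' \<le> 2 * muX k j x x'))"

definition fail_prob :: "nat \<Rightarrow> nat \<Rightarrow> nat set \<Rightarrow> (nat \<Rightarrow> nat \<Rightarrow> bool) \<Rightarrow> real \<Rightarrow> real" where
  "fail_prob k j V E q0 =
     real (card {\<alpha> \<in> labelings k j V E. \<not> eff_sim k j V E \<alpha> q0}) /
     real (card (labelings k j V E))"

end

theory Submission
  imports Defs "HOL-Real_Asymp.Real_Asymp"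
begin

text \<open>
  For reduced \<open>y\<close>, the kernel \<open>\<mu>\<^sup>q\<^sub>G\<^sub>,\<^sub>\<alpha>(x \<rightarrow> xy)\<close> is the \<open>\<nu>\<^sub>G\<close>-weighted proportion of walks of
  length \<open>q\<close> in \<open>G\<close> whose label reduces to \<open>y\<close>. The indicator of a walk only depends on the labels
  of the edges among its own vertices, so only pairs of walks sharing a vertex contribute to the
  variance over \<open>\<alpha>\<close>; by stationarity their total weight is at most
  \<open>(q + 1)\<^sup>2 \<Sum>\<^sub>v \<nu>\<^sub>G(v)\<^sup>2 \<le> (q + 1)\<^sup>2 d\<^sup>2 / 9N\<close>. Below the girth every vertex starts a self-avoiding
  walk, whose labels are independent and uniform, so the mean is at least
  \<open>3 / (d (d (2k)\<^sup>j)\<^sup>q)\<close> for every reachable \<open>y\<close>. Chebyshev's inequality and a union bound over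
  \<open>q \<le> Q\<close> and the reachable \<open>y\<close> bound the failure probability by \<open>O((Q + 1)\<^sup>3 B\<^sup>Q / N)\<close> with
  \<open>B = d\<^sup>2 (2k)\<^sup>3\<^sup>j\<close>, which is \<open>O(log\<^sup>3 N / \<surd>N)\<close> for \<open>Q \<approx> C' log N\<close> with \<open>C' log B \<le> 1/2\<close>.
  For \<open>q = 1\<close> the mean is exactly \<open>\<mu>\<^sub>X\<^sup>j\<close>, which gives the upper bound on \<open>\<mu>\<^sup>1\<^sub>G\<^sub>,\<^sub>\<alpha>\<close>.
\<close>

section \<open>Free reduction\<close>

lemma linv_linv [simp]: "linv (linv a) = a"
  by (cases a) auto

lemma reduced_Nil [simp]: "reduced []"
  and reduced_singleton [simp]: "reduced [a]"
  by (auto simp: reduced_def)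

lemma reduced_Cons_Cons: "reduced (a # b # w) \<longleftrightarrow> b \<noteq> linv a \<and> reduced (b # w)"
  unfolding reduced_def by (auto simp: nth_Cons split: nat.split)

lemma reduced_ConsD: "reduced (a # w) \<Longrightarrow> reduced w"
  by (cases w) (auto simp: reduced_Cons_Cons)

lemma reduced_red: "reduced (red w)"
  by (induction w) (auto split: list.splits simp: reduced_Cons_Cons dest: reduced_ConsD)

lemma red_reduced: "reduced w \<Longrightarrow> red w = w"
proof (induction w)
  case (Cons a w)
  then have "red w = w"
    using reduced_ConsD by blast
  with Cons.prems show ?case
    by (cases w) (auto simp: reduced_Cons_Cons)
qed simp

lemma red_red [simp]: "red (red w) = red w"
  by (simp add: red_reduced reduced_red)

lemma red_append_red: "red (a @ red b) = red (a @ b)"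
  by (induction a) auto

lemma red_linv_Cons_Cons: "red (linv c # c # v) = red v"
  using reduced_red[of v]
  by (auto split: list.splits simp: reduced_Cons_Cons)

lemma winv_Nil [simp]: "winv [] = []"
  and winv_Cons [simp]: "winv (c # x) = winv x @ [linv c]"
  and winv_winv [simp]: "winv (winv x) = x"
  and length_winv [simp]: "length (winv x) = length x"
  and set_winv: "set (winv x) = linv ` set x"
  by (simp_all add: winv_def rev_map comp_def)

lemma red_winv_append_cancel: "red (winv x @ x @ v) = red v"
proof (induction x arbitrary: v)
  case (Cons c x)
  have "red (winv (c # x) @ (c # x) @ v) = red (winv x @ (linv c # c # x @ v))"
    by simp
  also have "\<dots> = red (winv x @ red (linv c # c # x @ v))"
    by (simp only: red_append_red)
  also have "\<dots> = red (winv x @ red (x @ v))"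
    by (simp only: red_linv_Cons_Cons)
  also have "\<dots> = red v"
    by (simp add: red_append_red Cons.IH)
  finally show ?case .
qed simp

lemma red_append_winv_cancel: "red (x @ winv x @ v) = red v"
  using red_winv_append_cancel[of "winv x" v] by simp

lemma red_append_eq_iff:
  assumes "reduced x'"
  shows "red (x @ w) = x' \<longleftrightarrow> red w = red (winv x @ x')"
proof
  assume "red (x @ w) = x'"
  then have "red (winv x @ x') = red (winv x @ x @ w)"
    by (metis red_append_red)
  then show "red w = red (winv x @ x')"
    by (simp add: red_winv_append_cancel)
next
  assume "red w = red (winv x @ x')"
  then have "red (x @ w) = red (x @ winv x @ x')"
    by (metis red_append_red)
  then show "red (x @ w) = x'"
    using assms by (simp add: red_append_winv_cancel red_reduced)
qed

lemma gens_eq: "gens k = {..<k} \<times> UNIV"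
  by (auto simp: gens_def)

lemma finite_gens [simp]: "finite (gens k)"
  and card_gens: "card (gens k) = 2 * k"
  by (simp_all add: gens_eq card_cartesian_product)

lemma words_eq: "words k j = {w. set w \<subseteq> gens k \<and> length w = j}"
  by (auto simp: words_def)

lemma finite_words [simp]: "finite (words k j)"
  by (simp add: words_eq finite_lists_length_eq)

lemma card_words: "card (words k j) = (2 * k) ^ j"
  by (simp add: words_eq card_lists_length_eq card_gens)

lemma words_nonempty: "k \<ge> 1 \<Longrightarrow> words k j \<noteq> {}"
  by (metis card.empty card_words mult_is_0 power_not_zero not_one_le_zero zero_neq_numeral)

lemma winv_in_words: "w \<in> words k j \<Longrightarrow> winv w \<in> words k j"
  by (auto simp: words_def set_winv gens_def)

lemma bij_betw_winv_words: "bij_betw winv (words k j) (words k j)"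
  by (rule bij_betwI[where g = winv]) (auto simp: winv_in_words)

lemma concat_in_words: "(\<And>w. w \<in> set ws \<Longrightarrow> w \<in> words k j) \<Longrightarrow> concat ws \<in> words k (length ws * j)"
  by (induction ws) (auto simp: words_def)

lemma concat_chunks:
  "length w = q * j \<Longrightarrow> concat (map (\<lambda>i. take j (drop (i * j) w)) [0..<q]) = w"
proof (induction q arbitrary: w)
  case (Suc q)
  have "concat (map (\<lambda>i. take j (drop (i * j) w)) [0..<Suc q]) =
        take j w @ concat (map (\<lambda>i. take j (drop (i * j) (drop j w))) [0..<q])"
    by (simp add: upt_conv_Cons map_Suc_upt[symmetric] add.commute comp_def del: upt_Suc)
  also have "\<dots> = w"
    using Suc.IH[of "drop j w"] Suc.prems by simp
  finally show ?case .
qed simp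

section \<open>Uniform product spaces\<close>

lemma bij_betw_override_on_PiE:
  assumes "A \<subseteq> I"
  shows "bij_betw (\<lambda>(\<beta>, \<gamma>). override_on \<gamma> \<beta> A)
           (PiE A (\<lambda>_. W) \<times> PiE (I - A) (\<lambda>_. W)) (PiE I (\<lambda>_. W))"
  by (rule bij_betwI[where g = "\<lambda>\<alpha>. (restrict \<alpha> A, restrict \<alpha> (I - A))"])
    (use assms in \<open>auto simp: override_on_def PiE_def extensional_def fun_eq_iff\<close>)

lemma sum_PiE_split:
  assumes "A \<subseteq> I"
  shows "(\<Sum>\<alpha>\<in>PiE I (\<lambda>_. W). h \<alpha>) =
         (\<Sum>\<beta>\<in>PiE A (\<lambda>_. W). \<Sum>\<gamma>\<in>PiE (I - A) (\<lambda>_. W). h (override_on \<gamma> \<beta> A))"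
  by (simp add: sum.reindex_bij_betw[OF bij_betw_override_on_PiE[OF assms], symmetric]
      sum.cartesian_product split_def)

lemma card_PiE_split:
  "A \<subseteq> I \<Longrightarrow> card (PiE I (\<lambda>_. W)) = card (PiE A (\<lambda>_. W)) * card (PiE (I - A) (\<lambda>_. W))"
  by (metis bij_betw_same_card[OF bij_betw_override_on_PiE] card_cartesian_product)

lemma sum_PiE_mult_independent:
  fixes f g :: "('i \<Rightarrow> 'a) \<Rightarrow> real"
  assumes "A \<subseteq> I" "B \<subseteq> I" "A \<inter> B = {}" "W \<noteq> {}"
    and f: "\<And>\<alpha> \<alpha>'. \<alpha> \<in> PiE I (\<lambda>_. W) \<Longrightarrow> \<alpha>' \<in> PiE I (\<lambda>_. W) \<Longrightarrow> (\<forall>i\<in>A. \<alpha> i = \<alpha>' i) \<Longrightarrow> f \<alpha> = f \<alpha>'"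
    and g: "\<And>\<alpha> \<alpha>'. \<alpha> \<in> PiE I (\<lambda>_. W) \<Longrightarrow> \<alpha>' \<in> PiE I (\<lambda>_. W) \<Longrightarrow> (\<forall>i\<in>B. \<alpha> i = \<alpha>' i) \<Longrightarrow> g \<alpha> = g \<alpha>'"
  shows "(\<Sum>\<alpha>\<in>PiE I (\<lambda>_. W). f \<alpha> * g \<alpha>) * card (PiE I (\<lambda>_. W)) =
         (\<Sum>\<alpha>\<in>PiE I (\<lambda>_. W). f \<alpha>) * (\<Sum>\<alpha>\<in>PiE I (\<lambda>_. W). g \<alpha>)"
proof -
  let ?PA = "PiE A (\<lambda>_. W)" and ?PB = "PiE (I - A) (\<lambda>_. W)"
  obtain \<beta>0 \<gamma>0 where \<beta>0: "\<beta>0 \<in> ?PA" and \<gamma>0: "\<gamma>0 \<in> ?PB"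
    using \<open>W \<noteq> {}\<close> by (metis PiE_eq_empty_iff ex_in_conv)
  define F where "F \<beta> = f (override_on \<gamma>0 \<beta> A)" for \<beta>
  define G where "G \<gamma> = g (override_on \<gamma> \<beta>0 A)" for \<gamma>
  have override_in: "override_on \<gamma> \<beta> A \<in> PiE I (\<lambda>_. W)" if "\<beta> \<in> ?PA" "\<gamma> \<in> ?PB" for \<beta> \<gamma>
    using that assms(1) by (auto simp: override_on_def PiE_def extensional_def)
  have f_eq: "f (override_on \<gamma> \<beta> A) = F \<beta>" and g_eq: "g (override_on \<gamma> \<beta> A) = G \<gamma>"
    if "\<beta> \<in> ?PA" "\<gamma> \<in> ?PB" for \<beta> \<gamma>
    unfolding F_def G_def using that \<beta>0 \<gamma>0 assms(3)
    by (auto intro!: f g override_in)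
  have "(\<Sum>\<alpha>\<in>PiE I (\<lambda>_. W). f \<alpha> * g \<alpha>) = (\<Sum>\<beta>\<in>?PA. F \<beta>) * (\<Sum>\<gamma>\<in>?PB. G \<gamma>)"
    unfolding sum_PiE_split[OF assms(1)] sum_product by (intro sum.cong refl) (simp add: f_eq g_eq)
  moreover have "(\<Sum>\<alpha>\<in>PiE I (\<lambda>_. W). f \<alpha>) = card ?PB * (\<Sum>\<beta>\<in>?PA. F \<beta>)"
    unfolding sum_PiE_split[OF assms(1)] by (simp add: f_eq sum_distrib_left[symmetric])
  moreover have "(\<Sum>\<alpha>\<in>PiE I (\<lambda>_. W). g \<alpha>) = card ?PA * (\<Sum>\<gamma>\<in>?PB. G \<gamma>)"
    unfolding sum_PiE_split[OF assms(1)] by (simp add: g_eq sum_distrib_left[symmetric])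
  ultimately show ?thesis
    unfolding card_PiE_split[OF assms(1)] by (simp add: algebra_simps)
qed

lemma card_PiE_agree_on:
  assumes "finite I" "A \<subseteq> I" "\<beta> \<in> PiE A (\<lambda>_. W)" "finite W"
  shows "card {\<alpha> \<in> PiE I (\<lambda>_. W). \<forall>i\<in>A. \<alpha> i = \<beta> i} * card (PiE A (\<lambda>_. W)) = card (PiE I (\<lambda>_. W))"
proof -
  let ?PA = "PiE A (\<lambda>_. W)" and ?PB = "PiE (I - A) (\<lambda>_. W)"
  have "finite ?PA"
    using assms finite_subset by (auto intro!: finite_PiE)
  moreover have "(\<forall>i\<in>A. override_on \<gamma> \<beta>' A i = \<beta> i) \<longleftrightarrow> \<beta>' = \<beta>" if "\<beta>' \<in> ?PA" for \<beta>' \<gamma>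
    using that assms(3) by (auto simp: PiE_def extensional_def fun_eq_iff)
  ultimately have "(\<Sum>\<alpha>\<in>PiE I (\<lambda>_. W). if \<forall>i\<in>A. \<alpha> i = \<beta> i then 1 else 0) = card ?PB"
    using assms(3) by (simp add: sum_PiE_split[OF assms(2)] sum_distrib_left[symmetric] cong: if_cong)
  moreover have "finite (PiE I (\<lambda>_. W))"
    using assms by (simp add: finite_PiE)
  ultimately show ?thesis
    using card_PiE_split[OF assms(2), of W] sum.inter_filter[of "PiE I (\<lambda>_. W)" "\<lambda>_. 1::nat"]
    by (simp add: mult.commute)
qed

lemma card_PiE_le_card_agree_on:
  assumes "finite I" "A \<subseteq> I" "\<beta> \<in> PiE A (\<lambda>_. W)" "finite W" "W \<noteq> {}" "card A \<le> q"
  shows "card (PiE I (\<lambda>_. W)) \<le> card {\<alpha> \<in> PiE I (\<lambda>_. W). \<forall>i\<in>A. \<alpha> i = \<beta> i} * card W ^ q"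
proof -
  have "finite A"
    using assms(1,2) finite_subset by blast
  then have "card (PiE A (\<lambda>_. W)) = card W ^ card A"
    by (simp add: card_PiE)
  also have "\<dots> \<le> card W ^ q"
    using assms(4-6) by (intro power_increasing) (auto simp: Suc_le_eq card_gt_0_iff)
  finally have "card {\<alpha> \<in> PiE I (\<lambda>_. W). \<forall>i\<in>A. \<alpha> i = \<beta> i} * card (PiE A (\<lambda>_. W))
      \<le> card {\<alpha> \<in> PiE I (\<lambda>_. W). \<forall>i\<in>A. \<alpha> i = \<beta> i} * card W ^ q"
    by (rule mult_le_mono2)
  then show ?thesis
    unfolding card_PiE_agree_on[OF assms(1-4)] .
qed

lemma sum_PiE_coordinate:
  fixes g :: "'a \<Rightarrow> real"
  assumes "e \<in> I"
  shows "(\<Sum>\<alpha>\<in>PiE I (\<lambda>_. W). g (\<alpha> e)) * card W = card (PiE I (\<lambda>_. W)) * (\<Sum>s\<in>W. g s)"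
proof -
  have "{e} \<subseteq> I"
    using assms by simp
  have bij: "bij_betw (\<lambda>\<beta>. \<beta> e) (PiE {e} (\<lambda>_. W)) W"
    by (rule bij_betwI[where g = "\<lambda>s. (\<lambda>i. if i = e then s else undefined)"])
      (auto simp: PiE_def extensional_def fun_eq_iff)
  have "(\<Sum>\<alpha>\<in>PiE I (\<lambda>_. W). g (\<alpha> e)) = card (PiE (I - {e}) (\<lambda>_. W)) * (\<Sum>s\<in>W. g s)"
    by (simp add: sum_PiE_split[OF \<open>{e} \<subseteq> I\<close>] sum.reindex_bij_betw[OF bij] sum_distrib_left[symmetric])
  then show ?thesis
    using card_PiE_split[OF \<open>{e} \<subseteq> I\<close>, of W] bij_betw_same_card[OF bij] by simp
qed

section \<open>Second moments\<close>

lemma sum_sq_deviation: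
  fixes \<Omega> :: "'a set" and Z :: "'a \<Rightarrow> real"
  defines "m \<equiv> (\<Sum>\<alpha>\<in>\<Omega>. Z \<alpha>) / card \<Omega>"
  assumes "finite \<Omega>" "\<Omega> \<noteq> {}"
  shows "(\<Sum>\<alpha>\<in>\<Omega>. (Z \<alpha> - m)\<^sup>2) = (\<Sum>\<alpha>\<in>\<Omega>. (Z \<alpha>)\<^sup>2) - (\<Sum>\<alpha>\<in>\<Omega>. Z \<alpha>)\<^sup>2 / card \<Omega>"
proof -
  define c where "c = real (card \<Omega>)"
  have "c > 0"
    using assms by (simp add: c_def card_gt_0_iff)
  then have s: "(\<Sum>\<alpha>\<in>\<Omega>. Z \<alpha>) = c * m"
    by (simp add: m_def c_def)
  have "(\<Sum>\<alpha>\<in>\<Omega>. (Z \<alpha> - m)\<^sup>2) = (\<Sum>\<alpha>\<in>\<Omega>. (Z \<alpha>)\<^sup>2) + c * m\<^sup>2 - 2 * (\<Sum>\<alpha>\<in>\<Omega>. Z \<alpha>) * m"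
    by (simp add: power2_diff sum.distrib sum_subtractf sum_distrib_right[symmetric]
        sum_distrib_left[symmetric] c_def)
  also have "\<dots> = (\<Sum>\<alpha>\<in>\<Omega>. (Z \<alpha>)\<^sup>2) - (\<Sum>\<alpha>\<in>\<Omega>. Z \<alpha>)\<^sup>2 / c"
    unfolding s using \<open>c > 0\<close> by (simp add: power2_eq_square)
  finally show ?thesis
    by (simp add: c_def)
qed

lemma sum_sq_deviation_le_overlaps:
  fixes I :: "'i set" and W :: "'a set" and P :: "'p set"
    and w :: "'p \<Rightarrow> real" and X :: "'p \<Rightarrow> ('i \<Rightarrow> 'a) \<Rightarrow> real" and D :: "'p \<Rightarrow> 'i set"
  defines "\<Omega> \<equiv> PiE I (\<lambda>_. W)" and "Z \<equiv> \<lambda>\<alpha>. \<Sum>p\<in>P. w p * X p \<alpha>"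
  assumes "finite I" "finite W" "W \<noteq> {}" "finite P"
    and w: "\<And>p. p \<in> P \<Longrightarrow> 0 \<le> w p"
    and X: "\<And>p \<alpha>. 0 \<le> X p \<alpha> \<and> X p \<alpha> \<le> 1"
    and D: "\<And>p. p \<in> P \<Longrightarrow> D p \<subseteq> I"
    and local: "\<And>p \<alpha> \<alpha>'. p \<in> P \<Longrightarrow> \<alpha> \<in> \<Omega> \<Longrightarrow> \<alpha>' \<in> \<Omega> \<Longrightarrow> (\<forall>i\<in>D p. \<alpha> i = \<alpha>' i) \<Longrightarrow> X p \<alpha> = X p \<alpha>'"
  shows "(\<Sum>\<alpha>\<in>\<Omega>. (Z \<alpha> - (\<Sum>\<alpha>\<in>\<Omega>. Z \<alpha>) / card \<Omega>)\<^sup>2)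
         \<le> card \<Omega> * (\<Sum>p\<in>P. \<Sum>p'\<in>P. if D p \<inter> D p' = {} then 0 else w p * w p')"
proof -
  let ?c = "real (card \<Omega>)"
  have "finite \<Omega>" "\<Omega> \<noteq> {}"
    using assms(3-5) by (simp_all add: \<Omega>_def finite_PiE PiE_eq_empty_iff)
  then have "?c > 0"
    by (simp add: card_gt_0_iff)
  define S where "S p = (\<Sum>\<alpha>\<in>\<Omega>. X p \<alpha>)" for p
  define T where "T p p' = (\<Sum>\<alpha>\<in>\<Omega>. X p \<alpha> * X p' \<alpha>)" for p p'
  have sum_sq: "(\<Sum>\<alpha>\<in>\<Omega>. (Z \<alpha>)\<^sup>2) = (\<Sum>p\<in>P. \<Sum>p'\<in>P. w p * w p' * T p p')"
  proof -
    have "(\<Sum>\<alpha>\<in>\<Omega>. (Z \<alpha>)\<^sup>2) = (\<Sum>\<alpha>\<in>\<Omega>. \<Sum>p\<in>P. \<Sum>p'\<in>P. w p * w p' * (X p \<alpha> * X p' \<alpha>))"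
      unfolding Z_def power2_eq_square sum_product by (intro sum.cong refl) (simp only: mult_ac)
    also have "\<dots> = (\<Sum>p\<in>P. \<Sum>\<alpha>\<in>\<Omega>. \<Sum>p'\<in>P. w p * w p' * (X p \<alpha> * X p' \<alpha>))"
      by (rule sum.swap)
    also have "\<dots> = (\<Sum>p\<in>P. \<Sum>p'\<in>P. \<Sum>\<alpha>\<in>\<Omega>. w p * w p' * (X p \<alpha> * X p' \<alpha>))"
      by (intro sum.cong refl) (rule sum.swap)
    finally show ?thesis
      by (simp add: T_def sum_distrib_left)
  qed
  have sq_sum: "(\<Sum>\<alpha>\<in>\<Omega>. Z \<alpha>)\<^sup>2 / ?c = (\<Sum>p\<in>P. \<Sum>p'\<in>P. w p * w p' * (S p * S p' / ?c))"
  proof -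
    have total: "(\<Sum>\<alpha>\<in>\<Omega>. Z \<alpha>) = (\<Sum>p\<in>P. w p * S p)"
      unfolding Z_def S_def by (subst sum.swap) (simp add: sum_distrib_left)
    show ?thesis
      unfolding total power2_eq_square sum_product sum_divide_distrib
      by (intro sum.cong refl) (simp only: times_divide_eq_right mult_ac)
  qed
  have covariance: "w p * w p' * (T p p' - S p * S p' / ?c) \<le> ?c * (if D p \<inter> D p' = {} then 0 else w p * w p')"
    if "p \<in> P" "p' \<in> P" for p p'
  proof (cases "D p \<inter> D p' = {}")
    case True
    have "T p p' * ?c = S p * S p'"
      unfolding T_def S_def \<Omega>_def
      by (rule sum_PiE_mult_independent[OF D[OF that(1)] D[OF that(2)] True \<open>W \<noteq> {}\<close>])
        (blast intro: local[OF that(1), unfolded \<Omega>_def] local[OF that(2), unfolded \<Omega>_def])+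
    with \<open>?c > 0\<close> True show ?thesis
      by (simp add: field_simps)
  next
    case False
    have "T p p' \<le> (\<Sum>\<alpha>\<in>\<Omega>. 1)"
      unfolding T_def by (intro sum_mono) (use X in \<open>auto intro: mult_le_one\<close>)
    moreover have "S p * S p' / ?c \<ge> 0"
      unfolding S_def using X by (simp add: sum_nonneg)
    ultimately have "T p p' - S p * S p' / ?c \<le> ?c"
      by simp
    then have "w p * w p' * (T p p' - S p * S p' / ?c) \<le> w p * w p' * ?c"
      using w that by (simp add: mult_left_mono)
    then show ?thesis
      using False by (simp only: if_False mult.commute)
  qed
  have "(\<Sum>\<alpha>\<in>\<Omega>. (Z \<alpha> - (\<Sum>\<alpha>\<in>\<Omega>. Z \<alpha>) / card \<Omega>)\<^sup>2) = (\<Sum>p\<in>P. \<Sum>p'\<in>P. w p * w p' * (T p p' - S p * S p' / ?c))"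
    unfolding sum_sq_deviation[OF \<open>finite \<Omega>\<close> \<open>\<Omega> \<noteq> {}\<close>] sum_sq sq_sum
    by (simp only: sum_subtractf[symmetric] right_diff_distrib)
  also have "\<dots> \<le> (\<Sum>p\<in>P. \<Sum>p'\<in>P. ?c * (if D p \<inter> D p' = {} then 0 else w p * w p'))"
    by (intro sum_mono covariance)
  finally show ?thesis
    by (simp add: sum_distrib_left)
qed

lemma chebyshev_card:
  fixes Z :: "'a \<Rightarrow> real" and t :: real
  assumes "finite \<Omega>" "t > 0"
  shows "real (card {\<alpha> \<in> \<Omega>. t \<le> \<bar>Z \<alpha> - m\<bar>}) * t\<^sup>2 \<le> (\<Sum>\<alpha>\<in>\<Omega>. (Z \<alpha> - m)\<^sup>2)"
proof -
  let ?B = "{\<alpha> \<in> \<Omega>. t \<le> \<bar>Z \<alpha> - m\<bar>}"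
  have "real (card ?B) * t\<^sup>2 = (\<Sum>\<alpha>\<in>?B. t\<^sup>2)"
    by simp
  also have "\<dots> \<le> (\<Sum>\<alpha>\<in>?B. (Z \<alpha> - m)\<^sup>2)"
  proof (intro sum_mono)
    fix \<alpha> assume "\<alpha> \<in> ?B"
    then show "t\<^sup>2 \<le> (Z \<alpha> - m)\<^sup>2"
      using \<open>t > 0\<close> by (metis mem_Collect_eq power2_abs power_mono order_less_imp_le)
  qed
  also have "\<dots> \<le> (\<Sum>\<alpha>\<in>\<Omega>. (Z \<alpha> - m)\<^sup>2)"
    using assms(1) by (intro sum_mono2) auto
  finally show ?thesis .
qed

section \<open>Graphs and stationary walks\<close>

lemma simple_graph_edgeD:
  "simple_graph V E \<Longrightarrow> E u v \<Longrightarrow> u \<in> V \<and> v \<in> V \<and> u \<noteq> v \<and> E v u"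
  by (auto simp: simple_graph_def)

lemma simple_graph_finite: "simple_graph V E \<Longrightarrow> finite V"
  by (simp add: simple_graph_def)

lemma deg_notin: "simple_graph V E \<Longrightarrow> u \<notin> V \<Longrightarrow> deg V E u = 0"
  by (metis (mono_tags, lifting) Collect_empty_eq card.empty deg_def simple_graph_edgeD)

lemma card_in_neighbours_eq_deg: "simple_graph V E \<Longrightarrow> card {u \<in> V. E u v} = deg V E v"
  unfolding deg_def by (metis simple_graph_edgeD)

lemma finite_oedges: "simple_graph V E \<Longrightarrow> finite (oedges V E)"
  by (rule finite_subset[of _ "V \<times> V"]) (auto simp: oedges_def simple_graph_def)

lemma oedge_of_edge:
  "simple_graph V E \<Longrightarrow> E a b \<Longrightarrow> (if a < b then (a, b) else (b, a)) \<in> oedges V E"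
  by (auto simp: oedges_def dest: simple_graph_edgeD)

lemma sum_deg_eq_twice_card_oedges:
  assumes G: "simple_graph V E"
  shows "(\<Sum>u\<in>V. deg V E u) = 2 * card (oedges V E)"
proof -
  let ?D = "{(u, v). E u v}"
  have "?D = Sigma V (\<lambda>u. {v \<in> V. E u v})"
    using simple_graph_edgeD[OF G] by auto
  then have "card ?D = (\<Sum>u\<in>V. deg V E u)"
    using simple_graph_finite[OF G] by (simp add: deg_def)
  moreover have "?D = oedges V E \<union> prod.swap ` oedges V E"
    using simple_graph_edgeD[OF G] by (force simp: oedges_def image_iff split: prod.splits
        intro: linorder_neqE_nat)
  moreover have "oedges V E \<inter> prod.swap ` oedges V E = {}"
    by (auto simp: oedges_def)
  then have "card (oedges V E \<union> prod.swap ` oedges V E) = card (oedges V E) + card (prod.swap ` oedges V E)"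
    using finite_oedges[OF G] by (simp add: card_Un_disjoint)
  moreover have "card (prod.swap ` oedges V E) = card (oedges V E)"
    by (rule card_image) (auto simp: inj_on_def)
  ultimately show ?thesis
    by simp
qed

definition stationary :: "nat set \<Rightarrow> (nat \<Rightarrow> nat \<Rightarrow> bool) \<Rightarrow> nat \<Rightarrow> real" where
  "stationary V E v = real (deg V E v) / (2 * real (card (oedges V E)))"

lemma card_oedges_pos:
  assumes G: "simple_graph V E" and pos: "\<forall>u\<in>V. deg V E u > 0" and "V \<noteq> {}"
  shows "card (oedges V E) > 0"
proof -
  obtain u where "u \<in> V"
    using \<open>V \<noteq> {}\<close> by blast
  then have "(\<Sum>u\<in>V. deg V E u) > 0"
    using pos simple_graph_finite[OF G] by (metis gr0I sum_eq_0_iff)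
  then show ?thesis
    using sum_deg_eq_twice_card_oedges[OF G] by simp
qed

lemma sum_stationary:
  assumes G: "simple_graph V E" and pos: "\<forall>u\<in>V. deg V E u > 0" and "V \<noteq> {}"
  shows "(\<Sum>v\<in>V. stationary V E v) = 1"
proof -
  have "(\<Sum>v\<in>V. stationary V E v) = real (\<Sum>v\<in>V. deg V E v) / (2 * real (card (oedges V E)))"
    by (simp add: stationary_def sum_divide_distrib)
  then show ?thesis
    using sum_deg_eq_twice_card_oedges[OF G] card_oedges_pos[OF assms] by simp
qed

lemma stationary_step:
  assumes G: "simple_graph V E" and pos: "\<forall>u\<in>V. deg V E u > 0"
  shows "(\<Sum>u\<in>V. (if E u v then 1 / real (deg V E u) else 0) * stationary V E u) = stationary V E v"
proof -
  have "(\<Sum>u\<in>V. (if E u v then 1 / real (deg V E u) else 0) * stationary V E u) =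
        (\<Sum>u\<in>V. if E u v then 1 / (2 * real (card (oedges V E))) else 0)"
    using pos by (intro sum.cong refl) (auto simp: stationary_def)
  also have "\<dots> = real (card {u \<in> V. E u v}) / (2 * real (card (oedges V E)))"
    using simple_graph_finite[OF G] by (simp add: sum.If_cases Int_def)
  finally show ?thesis
    by (simp add: stationary_def card_in_neighbours_eq_deg[OF G])
qed

lemma walksD:
  assumes "p \<in> walks V E q"
  shows "length p = Suc q" "set p \<subseteq> V" "\<And>i. i < q \<Longrightarrow> E (p ! i) (p ! Suc i)"
    "\<And>i. i \<le> q \<Longrightarrow> p ! i \<in> V" "p \<noteq> []"
  using assms by (auto simp: walks_def)

lemma last_conv_nth_length_Suc: "length p = Suc q \<Longrightarrow> last p = p ! q"
  by (subst last_conv_nth) auto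

lemma walks_last: "p \<in> walks V E q \<Longrightarrow> last p = p ! q"
  by (simp add: walksD(1) last_conv_nth_length_Suc)

lemma walks_0: "walks V E 0 = (\<lambda>u. [u]) ` V"
  by (auto simp: walks_def length_Suc_conv)

lemma walks_Suc:
  "walks V E (Suc q) = (\<lambda>(p, z). p @ [z]) ` (SIGMA p:walks V E q. {z \<in> V. E (last p) z})"
proof (intro equalityI subsetI)
  fix p' assume p': "p' \<in> walks V E (Suc q)"
  then have "p' = butlast p' @ [last p']"
    using walksD(5) by simp
  moreover have "butlast p' \<in> walks V E q"
    using p' by (auto simp: walks_def nth_butlast dest: in_set_butlastD)
  moreover have "last p' \<in> V" "E (last (butlast p')) (last p')"
    using p' walksD[OF p'] last_conv_nth_length_Suc[of "butlast p'" q]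
    by (auto simp: walks_last nth_butlast)
  ultimately show "p' \<in> (\<lambda>(p, z). p @ [z]) ` (SIGMA p:walks V E q. {z \<in> V. E (last p) z})"
    by (auto intro!: image_eqI[where x = "(butlast p', last p')"])
next
  fix p' assume "p' \<in> (\<lambda>(p, z). p @ [z]) ` (SIGMA p:walks V E q. {z \<in> V. E (last p) z})"
  then obtain p z where p': "p' = p @ [z]" and p: "p \<in> walks V E q" and z: "z \<in> V" "E (last p) z"
    by auto
  have "E ((p @ [z]) ! i) ((p @ [z]) ! Suc i)" if "i < Suc q" for i
    using that walksD(1,3)[OF p] walks_last[OF p] z(2)
    by (cases "i = q") (auto simp: nth_append)
  then show "p' \<in> walks V E (Suc q)"
    using p' walksD(1,2)[OF p] z(1) by (auto simp: walks_def)
qed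

lemma finite_walks: "finite V \<Longrightarrow> finite (walks V E q)"
  by (rule finite_subset[of _ "{p. set p \<subseteq> V \<and> length p = Suc q}"])
    (auto simp: walks_def finite_lists_length_eq)

lemma walk_weight_nonneg: "walk_weight V E p \<ge> 0"
  by (simp add: walk_weight_def prod_nonneg)

lemma walk_weight_snoc:
  assumes "p \<noteq> []"
  shows "walk_weight V E (p @ [z]) = walk_weight V E p / real (deg V E (last p))"
proof -
  obtain n where n: "length p = Suc n"
    using assms by (cases p) auto
  have "(\<Prod>i<length (p @ [z]) - 1. 1 / real (deg V E ((p @ [z]) ! i))) =
        (\<Prod>i<n. 1 / real (deg V E (p ! i))) * (1 / real (deg V E (last p)))"
    using n by (simp add: nth_append last_conv_nth_length_Suc)
  moreover have "(p @ [z]) ! 0 = p ! 0"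
    using assms by (simp add: nth_append)
  ultimately show ?thesis
    using n by (simp add: walk_weight_def)
qed

lemma sum_walks_Suc:
  assumes "finite V"
  shows "(\<Sum>p'\<in>walks V E (Suc q). walk_weight V E p' * f p') =
    (\<Sum>p\<in>walks V E q. walk_weight V E p / real (deg V E (last p)) * (\<Sum>z\<in>{z \<in> V. E (last p) z}. f (p @ [z])))"
proof -
  have "(\<Sum>p'\<in>walks V E (Suc q). walk_weight V E p' * f p') =
        (\<Sum>(p, z)\<in>(SIGMA p:walks V E q. {z \<in> V. E (last p) z}). walk_weight V E (p @ [z]) * f (p @ [z]))"
    unfolding walks_Suc by (subst sum.reindex) (auto simp: inj_on_def split_def)
  also have "\<dots> = (\<Sum>p\<in>walks V E q. \<Sum>z\<in>{z \<in> V. E (last p) z}. walk_weight V E (p @ [z]) * f (p @ [z]))"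
    using assms finite_walks by (subst sum.Sigma) auto
  finally show ?thesis
    by (simp add: walk_weight_snoc walksD sum_distrib_left cong: sum.cong)
qed

lemma walk_position_law:
  assumes G: "simple_graph V E" and pos: "\<forall>u\<in>V. deg V E u > 0" and "i \<le> q"
  shows "(\<Sum>p\<in>walks V E q. walk_weight V E p * (if p ! i = v then 1 else 0)) = stationary V E v"
  using \<open>i \<le> q\<close>
proof (induction q arbitrary: i v)
  case 0
  have "(\<Sum>p\<in>walks V E 0. walk_weight V E p * (if p ! 0 = v then 1 else 0)) =
        (\<Sum>u\<in>V. walk_weight V E [u] * (if u = v then 1 else 0))"
    unfolding walks_0 by (subst sum.reindex) (auto simp: inj_on_def)
  also have "\<dots> = (\<Sum>u\<in>V. if u = v then stationary V E u else 0)"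
    by (intro sum.cong refl) (simp add: walk_weight_def stationary_def)
  finally show ?case
    using 0 simple_graph_finite[OF G] deg_notin[OF G, of v] by (auto simp: stationary_def)
next
  case (Suc q)
  have fin: "finite V"
    using simple_graph_finite[OF G] .
  have deg_last: "deg V E (last p) \<noteq> 0" "card {z \<in> V. E (last p) z} = deg V E (last p)"
    if "p \<in> walks V E q" for p
    using pos walksD[OF that] walks_last[OF that] by (auto simp: deg_def)
  show ?case
  proof (cases "i \<le> q")
    case True
    have "(\<Sum>p'\<in>walks V E (Suc q). walk_weight V E p' * (if p' ! i = v then 1 else 0)) =
          (\<Sum>p\<in>walks V E q. walk_weight V E p * (if p ! i = v then 1 else 0))"
      unfolding sum_walks_Suc[OF fin]
    proof (rule sum.cong[OF refl])
      fix p assume p: "p \<in> walks V E q"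
      then show "walk_weight V E p / real (deg V E (last p)) *
          (\<Sum>z\<in>{z \<in> V. E (last p) z}. if (p @ [z]) ! i = v then 1 else 0) =
          walk_weight V E p * (if p ! i = v then 1 else 0)"
        using deg_last[OF p] walksD(1)[OF p] True by (simp add: nth_append)
    qed
    then show ?thesis
      using Suc.IH[OF True] by simp
  next
    case False
    then have "i = Suc q"
      using Suc.prems by simp
    define h where "h u = (if E u v then 1 / real (deg V E u) else 0)" for u
    have "(\<Sum>p'\<in>walks V E (Suc q). walk_weight V E p' * (if p' ! i = v then 1 else 0)) =
          (\<Sum>p\<in>walks V E q. walk_weight V E p * h (p ! q))"
      unfolding sum_walks_Suc[OF fin]
    proof (rule sum.cong[OF refl])
      fix p assume p: "p \<in> walks V E q"
      have "(\<Sum>z\<in>{z \<in> V. E (last p) z}. if (p @ [z]) ! i = v then 1 else 0) = (if E (last p) v then 1 else 0 :: real)"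
        using walksD(1)[OF p] \<open>i = Suc q\<close> simple_graph_edgeD[OF G, of "last p" v] fin
        by (simp add: nth_append sum.If_cases Int_def conj_commute)
      then show "walk_weight V E p / real (deg V E (last p)) *
          (\<Sum>z\<in>{z \<in> V. E (last p) z}. if (p @ [z]) ! i = v then 1 else 0) = walk_weight V E p * h (p ! q)"
        by (simp add: h_def walks_last[OF p, symmetric])
    qed
    also have "\<dots> = (\<Sum>p\<in>walks V E q. \<Sum>u\<in>V. h u * (walk_weight V E p * (if p ! q = u then 1 else 0)))"
      using fin walksD by (intro sum.cong refl) (simp add: if_distrib[of "\<lambda>x. _ * x"] cong: if_cong)
    also have "\<dots> = (\<Sum>u\<in>V. h u * stationary V E u)"
      using Suc.IH[of q] by (subst sum.swap) (simp add: sum_distrib_left[symmetric])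
    finally show ?thesis
      unfolding h_def stationary_step[OF G pos] .
  qed
qed

lemma sum_walk_weight:
  assumes G: "simple_graph V E" and pos: "\<forall>u\<in>V. deg V E u > 0" and "V \<noteq> {}"
  shows "(\<Sum>p\<in>walks V E q. walk_weight V E p) = 1"
proof -
  have "(\<Sum>p\<in>walks V E q. walk_weight V E p) =
        (\<Sum>p\<in>walks V E q. \<Sum>v\<in>V. walk_weight V E p * (if p ! 0 = v then 1 else 0))"
    using simple_graph_finite[OF G] walksD(4)
    by (intro sum.cong refl) (simp add: if_distrib[of "\<lambda>x. _ * x"] cong: if_cong)
  also have "\<dots> = (\<Sum>v\<in>V. stationary V E v)"
    by (subst sum.swap) (simp add: walk_position_law[OF G pos])
  finally show ?thesis
    using sum_stationary[OF assms] by simp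
qed

lemma is_cycle_drop_walk:
  assumes p: "p \<in> walks V E q" and "distinct p" and "i + 2 \<le> q" and closing: "E (p ! q) (p ! i)"
  shows "is_cycle V E (drop i p)"
proof -
  have len: "length (drop i p) = Suc q - i"
    using walksD(1)[OF p] by simp
  have "E (drop i p ! m) (drop i p ! Suc m)" if "Suc m < length (drop i p)" for m
    using that len walksD(1)[OF p] walksD(3)[OF p, of "i + m"] by simp
  moreover have "last (drop i p) = p ! q" "hd (drop i p) = p ! i"
    using walksD(1)[OF p] assms(3) by (simp_all add: last_conv_nth hd_drop_conv_nth)
  moreover have "set (drop i p) \<subseteq> V"
    using walksD(2)[OF p] by (meson in_set_dropD subset_iff)
  ultimately show ?thesis
    unfolding is_cycle_def using len assms(2,3) closing by simp
qed

text \<open>Below the girth a walk can always avoid its previous vertex and thus never closes a cycle.\<close>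
lemma self_avoiding_walk_exists:
  assumes G: "simple_graph V E" and deg2: "\<forall>u\<in>V. 2 \<le> deg V E u"
    and girth: "\<forall>c. is_cycle V E c \<longrightarrow> q < length c" and "u \<in> V"
  shows "\<exists>p\<in>walks V E q. p ! 0 = u \<and> distinct p"
  using girth
proof (induction q)
  case 0
  then show ?case
    using \<open>u \<in> V\<close> by (intro bexI[of _ "[u]"]) (auto simp: walks_def)
next
  case (Suc q)
  then obtain p where p: "p \<in> walks V E q" "p ! 0 = u" "distinct p"
    by fastforce
  let ?N = "{z \<in> V. E (p ! q) z}"
  have "card ?N \<ge> 2"
    using deg2 walksD(4)[OF p(1)] by (simp add: deg_def)
  then have "?N - {p ! (q - 1)} \<noteq> {}"
    using card_mono[of "{p ! (q - 1)}" ?N] by auto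
  then obtain z where z: "z \<in> ?N" "z \<noteq> p ! (q - 1)"
    by blast
  have "z \<notin> set p"
  proof
    assume "z \<in> set p"
    then obtain i where i: "i \<le> q" "p ! i = z"
      using walksD(1)[OF p(1)] by (auto simp: in_set_conv_nth less_Suc_eq_le)
    moreover have "i \<noteq> q"
      using i z simple_graph_edgeD[OF G] by blast
    moreover have "i \<noteq> q - 1"
      using i z by auto
    ultimately have "is_cycle V E (drop i p)"
      using z by (intro is_cycle_drop_walk[OF p(1) p(3)]) auto
    then have "Suc q < length (drop i p)"
      using Suc.prems by blast
    then show False
      using walksD(1)[OF p(1)] by simp
  qed
  then have "p @ [z] \<in> walks V E (Suc q)" "(p @ [z]) ! 0 = u" "distinct (p @ [z])"
    using p z walksD[OF p(1)] by (auto simp: walks_Suc walks_last nth_append intro!: image_eqI[where x = "(p, z)"])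
  then show ?case
    by blast
qed

lemma stationary_le:
  assumes G: "simple_graph V E" and degs: "\<forall>u\<in>V. 3 \<le> deg V E u \<and> deg V E u \<le> d"
    and "V \<noteq> {}" and "v \<in> V"
  shows "stationary V E v \<le> real d / (3 * real (card V))"
proof -
  have "3 * card V \<le> (\<Sum>u\<in>V. deg V E u)"
    using sum_mono[of V "\<lambda>_. 3" "deg V E"] degs by simp
  then have "3 * real (card V) \<le> 2 * real (card (oedges V E))"
    using sum_deg_eq_twice_card_oedges[OF G] by linarith
  moreover have "card V > 0"
    using simple_graph_finite[OF G] \<open>V \<noteq> {}\<close> by (simp add: card_gt_0_iff)
  ultimately show ?thesis
    unfolding stationary_def using degs \<open>v \<in> V\<close>
    by (intro frac_le) auto
qed

lemma sum_stationary_sq_le: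
  assumes G: "simple_graph V E" and degs: "\<forall>u\<in>V. 3 \<le> deg V E u \<and> deg V E u \<le> d" and "V \<noteq> {}"
  shows "(\<Sum>v\<in>V. (stationary V E v)\<^sup>2) \<le> real d ^ 2 / (9 * real (card V))"
proof -
  have "(\<Sum>v\<in>V. (stationary V E v)\<^sup>2) \<le> (\<Sum>v\<in>V. (real d / (3 * real (card V)))\<^sup>2)"
    using stationary_le[OF assms] by (intro sum_mono power_mono) (auto simp: stationary_def)
  also have "\<dots> = real d ^ 2 / (9 * real (card V))"
    using simple_graph_finite[OF G] \<open>V \<noteq> {}\<close> by (simp add: power_divide power2_eq_square)
  finally show ?thesis .
qed

lemma walk_weight_ge:
  assumes G: "simple_graph V E" and degs: "\<forall>u\<in>V. 3 \<le> deg V E u \<and> deg V E u \<le> d" and "V \<noteq> {}"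
    and p: "p \<in> walks V E q"
  shows "3 / (real d * real (card V)) * (1 / real d) ^ q \<le> walk_weight V E p"
proof -
  have "(\<Sum>u\<in>V. deg V E u) \<le> d * card V"
    using sum_mono[of V "deg V E" "\<lambda>_. d"] degs by (simp add: mult.commute)
  then have "2 * real (card (oedges V E)) \<le> real d * real (card V)"
    using sum_deg_eq_twice_card_oedges[OF G] by (metis of_nat_le_iff of_nat_mult of_nat_numeral)
  moreover have "card (oedges V E) > 0"
    by (rule card_oedges_pos[OF G _ \<open>V \<noteq> {}\<close>]) (use degs in force)
  ultimately have start: "3 / (real d * real (card V)) \<le> real (deg V E (p ! 0)) / (2 * real (card (oedges V E)))"
    using degs walksD(4)[OF p, of 0] by (intro frac_le) auto
  have "(1 / real d) ^ q = (\<Prod>i<q. 1 / real d)"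
    by simp
  also have "\<dots> \<le> (\<Prod>i<q. 1 / real (deg V E (p ! i)))"
  proof (intro prod_mono conjI)
    fix i assume "i \<in> {..<q}"
    then have "0 < deg V E (p ! i)" "deg V E (p ! i) \<le> d"
      using degs walksD(4)[OF p, of i] by auto
    then show "0 \<le> 1 / real d" "1 / real d \<le> 1 / real (deg V E (p ! i))"
      by (auto intro: divide_left_mono)
  qed
  finally show ?thesis
    unfolding walk_weight_def using start walksD(1)[OF p]
    by (intro mult_mono) (auto intro: prod_nonneg)
qed

section \<open>Labels of walks\<close>

lemma finite_labelings: "simple_graph V E \<Longrightarrow> finite (labelings k j V E)"
  by (simp add: labelings_def finite_oedges finite_PiE)

lemma card_labelings_pos: "simple_graph V E \<Longrightarrow> k \<ge> 1 \<Longrightarrow> card (labelings k j V E) > 0"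
  using finite_labelings[of V E k j] words_nonempty[of k j]
  by (simp add: card_gt_0_iff labelings_def PiE_eq_empty_iff)

lemma elab_in_words:
  assumes G: "simple_graph V E" and "E a b" and \<alpha>: "\<alpha> \<in> labelings k j V E"
  shows "elab \<alpha> a b \<in> words k j"
  using oedge_of_edge[OF G \<open>E a b\<close>] \<alpha> winv_in_words
  by (auto simp: elab_def labelings_def split: if_splits)

lemma plab_in_words:
  assumes G: "simple_graph V E" and p: "p \<in> walks V E q" and \<alpha>: "\<alpha> \<in> labelings k j V E"
  shows "plab \<alpha> p \<in> words k (q * j)"
proof -
  let ?ls = "map (\<lambda>i. elab \<alpha> (p ! i) (p ! Suc i)) [0..<q]"
  have "concat ?ls \<in> words k (length ?ls * j)"
    by (rule concat_in_words) (auto intro: elab_in_words[OF G walksD(3)[OF p] \<alpha>])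
  then show ?thesis
    using walksD(1)[OF p] by (simp add: plab_def)
qed

lemma plab_cong:
  assumes G: "simple_graph V E" and p: "p \<in> walks V E q"
    and agree: "\<forall>e\<in>oedges V E \<inter> (set p \<times> set p). \<alpha> e = \<alpha>' e"
  shows "plab \<alpha> p = plab \<alpha>' p"
  unfolding plab_def
proof (intro arg_cong[where f = concat] map_cong refl)
  fix i assume "i \<in> set [0..<length p - 1]"
  then have "i < q" "p ! i \<in> set p" "p ! Suc i \<in> set p"
    using walksD(1)[OF p] by auto
  with oedge_of_edge[OF G walksD(3)[OF p \<open>i < q\<close>]] agree
  show "elab \<alpha> (p ! i) (p ! Suc i) = elab \<alpha>' (p ! i) (p ! Suc i)"
    by (auto simp: elab_def split: if_splits)
qed

text \<open>The labels along a self-avoiding walk are independent and uniform, so it carries any given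
  word of the right length with probability at least \<open>|S\<^sup>j|\<^sup>-\<^sup>q\<close>.\<close>
lemma card_labelings_le_hits:
  assumes G: "simple_graph V E" and p: "p \<in> walks V E q" and "distinct p"
    and w0: "w0 \<in> words k (q * j)" and "k \<ge> 1"
  shows "real (card (labelings k j V E)) \<le>
           real (card (words k j)) ^ q * (\<Sum>\<alpha>\<in>labelings k j V E. if red (plab \<alpha> p) = red w0 then 1 else 0)"
proof -
  let ?W = "words k j" and ?\<Omega> = "labelings k j V E"
  define g where "g i = (if p ! i < p ! Suc i then (p ! i, p ! Suc i) else (p ! Suc i, p ! i))" for i
  define chunk where "chunk i = take j (drop (i * j) w0)" for i
  define A where "A = g ` {..<q}"
  have "inj_on g {..<q}"
    using walksD(1)[OF p] \<open>distinct p\<close>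
    by (intro inj_onI) (auto simp: g_def nth_eq_iff_index_eq split: if_splits)
  have A: "A \<subseteq> oedges V E"
    using oedge_of_edge[OF G walksD(3)[OF p]] unfolding A_def g_def by blast
  have chunk: "chunk i \<in> ?W" if "i < q" for i
  proof -
    have "i * j + j \<le> q * j"
      using that by (metis add.commute mult_Suc mult_le_mono1 Suc_leI)
    then show ?thesis
      using w0 by (auto simp: chunk_def words_def dest: in_set_dropD in_set_takeD)
  qed
  text \<open>The labeling of the edges of \<open>p\<close> that writes \<open>w0\<close> along \<open>p\<close>.\<close>
  define \<beta> where "\<beta> e = (if e \<in> A then (let i = inv_into {..<q} g e in
      if p ! i < p ! Suc i then chunk i else winv (chunk i)) else undefined)" for e
  have \<beta>_g: "\<beta> (g i) = (if p ! i < p ! Suc i then chunk i else winv (chunk i))" if "i < q" for i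
    using that \<open>inj_on g {..<q}\<close> by (simp add: \<beta>_def A_def Let_def)
  have \<beta>: "\<beta> \<in> PiE A (\<lambda>_. ?W)"
  proof (rule PiE_I)
    fix e assume "e \<in> A"
    then obtain i where "i < q" "e = g i"
      by (auto simp: A_def)
    then show "\<beta> e \<in> ?W"
      using \<beta>_g chunk winv_in_words by auto
  qed (simp add: \<beta>_def)
  let ?Agree = "{\<alpha> \<in> ?\<Omega>. \<forall>e\<in>A. \<alpha> e = \<beta> e}"
  have hit: "red (plab \<alpha> p) = red w0" if "\<alpha> \<in> ?Agree" for \<alpha>
  proof -
    have "elab \<alpha> (p ! i) (p ! Suc i) = chunk i" if "i < q" for i
      using that \<open>\<alpha> \<in> ?Agree\<close> \<beta>_g[OF that] by (auto simp: A_def elab_def g_def split: if_splits)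
    then have "plab \<alpha> p = concat (map chunk [0..<q])"
      unfolding plab_def using walksD(1)[OF p] by (intro arg_cong[where f = concat] map_cong) auto
    also have "\<dots> = w0"
      unfolding chunk_def using w0 by (intro concat_chunks) (simp add: words_def)
    finally show ?thesis
      by simp
  qed
  have "card A \<le> q"
    unfolding A_def using card_image_le[of "{..<q}" g] by simp
  then have "card ?\<Omega> \<le> card ?Agree * card ?W ^ q"
    unfolding labelings_def
    by (rule card_PiE_le_card_agree_on[OF finite_oedges[OF G] A \<beta> finite_words words_nonempty[OF \<open>k \<ge> 1\<close>]])
  then have bound: "real (card ?\<Omega>) \<le> real (card ?Agree) * real (card ?W) ^ q"
    using of_nat_mono by fastforce
  have "real (card ?Agree) = (\<Sum>\<alpha>\<in>?Agree. if red (plab \<alpha> p) = red w0 then 1 else 0)"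
    using hit by simp
  also have "\<dots> \<le> (\<Sum>\<alpha>\<in>?\<Omega>. if red (plab \<alpha> p) = red w0 then 1 else 0)"
    by (rule sum_mono2) (auto simp: finite_labelings[OF G])
  finally show ?thesis
    using bound mult_right_mono[of _ _ "real (card ?W) ^ q"] by (fastforce simp: mult.commute)
qed

section \<open>The simulated transition kernel\<close>

lemma muGa_translate:
  "reduced x' \<Longrightarrow> muGa V E \<alpha> q x x' = muGa V E \<alpha> q [] (red (winv x @ x'))"
  by (simp add: muGa_def red_append_eq_iff)

lemma mubar_translate:
  "reduced x' \<Longrightarrow> mubar k j V E q x x' = mubar k j V E q [] (red (winv x @ x'))"
  by (simp add: mubar_def muGa_translate)

lemma muX_translate:
  "reduced x' \<Longrightarrow> muX k j x x' = real (card {w \<in> words k j. red w = red (winv x @ x')}) / (2 * real k) ^ j"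
  by (simp add: muX_def red_append_eq_iff)

lemma muGa_unreachable:
  assumes G: "simple_graph V E" and \<alpha>: "\<alpha> \<in> labelings k j V E" and y: "y \<notin> red ` words k (q * j)"
  shows "muGa V E \<alpha> q [] y = 0"
  using plab_in_words[OF G _ \<alpha>] y by (force simp: muGa_def intro!: sum.neutral)

lemma sum_muGa_labelings:
  "(\<Sum>\<alpha>\<in>\<Omega>. muGa V E \<alpha> q [] y) =
   (\<Sum>p\<in>walks V E q. walk_weight V E p * (\<Sum>\<alpha>\<in>\<Omega>. if red (plab \<alpha> p) = y then 1 else 0))"
  unfolding muGa_def by (subst sum.swap) (simp add: sum_distrib_left)

lemma mubar_one_eq_muX:
  assumes G: "simple_graph V E" and pos: "\<forall>u\<in>V. deg V E u > 0" and "V \<noteq> {}" and "k \<ge> 1"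
    and "reduced x'"
  shows "mubar k j V E 1 x x' = muX k j x x'"
proof -
  let ?\<Omega> = "labelings k j V E" and ?W = "words k j"
  define y where "y = red (winv x @ x')"
  define c where "c = real (card {w \<in> ?W. red w = y}) / real (card ?W)"
  have "(\<Sum>\<alpha>\<in>?\<Omega>. if red (plab \<alpha> p) = y then 1 else 0) = real (card ?\<Omega>) * c"
    if p: "p \<in> walks V E 1" for p
  proof -
    obtain u v where uv: "p = [u, v]" "E u v"
      using walksD(1,3)[OF p] by (cases p rule: list.exhaust) (auto simp: length_Suc_conv)
    let ?e = "if u < v then (u, v) else (v, u)"
    let ?f = "\<lambda>s. if red (if u < v then s else winv s) = y then 1 else 0 :: real"
    have "(\<Sum>\<alpha>\<in>?\<Omega>. if red (plab \<alpha> p) = y then 1 else 0) = (\<Sum>\<alpha>\<in>?\<Omega>. ?f (\<alpha> ?e))"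
      by (simp add: uv plab_def elab_def)
    moreover have "(\<Sum>s\<in>?W. ?f s) = real (card {w \<in> ?W. red w = y})"
      using sum.reindex_bij_betw[OF bij_betw_winv_words, of "\<lambda>s. if red s = y then 1 else 0 :: real"]
      by (cases "u < v") (simp_all add: sum.If_cases Int_def)
    ultimately show ?thesis
      using sum_PiE_coordinate[OF oedge_of_edge[OF G uv(2)], of ?f "?W"]
        words_nonempty[OF \<open>k \<ge> 1\<close>]
      by (simp add: labelings_def c_def field_simps card_gt_0_iff)
  qed
  then have "(\<Sum>\<alpha>\<in>?\<Omega>. muGa V E \<alpha> 1 [] y) = real (card ?\<Omega>) * c"
    using sum_walk_weight[OF G pos \<open>V \<noteq> {}\<close>, of 1]
    by (simp add: sum_muGa_labelings sum_distrib_right[symmetric])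
  then have "mubar k j V E 1 [] y = c"
    using card_labelings_pos[OF G \<open>k \<ge> 1\<close>] by (simp add: mubar_def)
  then show ?thesis
    using \<open>reduced x'\<close> by (simp add: mubar_translate muX_translate y_def c_def card_words)
qed

section \<open>Concentration of the simulated kernel\<close>

lemma mubar_ge:
  assumes G: "simple_graph V E" and degs: "\<forall>u\<in>V. 3 \<le> deg V E u \<and> deg V E u \<le> d" and "V \<noteq> {}"
    and girth: "\<forall>c. is_cycle V E c \<longrightarrow> q < length c" and "k \<ge> 1"
    and y: "y \<in> red ` words k (q * j)"
  shows "3 / (real d * (real d * real (card (words k j))) ^ q) \<le> mubar k j V E q [] y"
proof -
  let ?\<Omega> = "labelings k j V E" and ?W = "words k j"
  let ?hits = "\<lambda>p. \<Sum>\<alpha>\<in>?\<Omega>. if red (plab \<alpha> p) = y then 1 else 0 :: real"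
  obtain w0 where w0: "w0 \<in> words k (q * j)" "y = red w0"
    using y by blast
  have "\<forall>u\<in>V. 2 \<le> deg V E u"
    using degs by force
  then have "\<forall>u\<in>V. \<exists>p\<in>walks V E q. p ! 0 = u \<and> distinct p"
    using self_avoiding_walk_exists[OF G _ girth] by blast
  then obtain start where start: "\<And>u. u \<in> V \<Longrightarrow> start u \<in> walks V E q \<and> start u ! 0 = u \<and> distinct (start u)"
    by metis
  have "inj_on start V"
    by (metis inj_onI start)
  define c1 where "c1 = 3 / (real d * real (card V)) * (1 / real d) ^ q"
  define c2 where "c2 = real (card ?\<Omega>) / real (card ?W) ^ q"
  have hits: "c2 \<le> ?hits (start u)" if "u \<in> V" for u
    using card_labelings_le_hits[OF G _ _ w0(1) \<open>k \<ge> 1\<close>] start[OF that] words_nonempty[OF \<open>k \<ge> 1\<close>]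
    by (simp add: c2_def w0(2) divide_le_eq card_gt_0_iff mult.commute)
  have "real (card ?\<Omega>) * (3 / (real d * (real d * real (card ?W)) ^ q)) = (\<Sum>u\<in>V. c1 * c2)"
    using \<open>V \<noteq> {}\<close> simple_graph_finite[OF G]
    by (simp add: c1_def c2_def field_simps)
  also have "\<dots> \<le> (\<Sum>u\<in>V. walk_weight V E (start u) * ?hits (start u))"
    using walk_weight_ge[OF G degs \<open>V \<noteq> {}\<close>] start hits
    by (intro sum_mono mult_mono) (auto simp: c1_def c2_def walk_weight_nonneg)
  also have "\<dots> = (\<Sum>p\<in>start ` V. walk_weight V E p * ?hits p)"
    by (simp add: sum.reindex[OF \<open>inj_on start V\<close>])
  also have "\<dots> \<le> (\<Sum>\<alpha>\<in>?\<Omega>. muGa V E \<alpha> q [] y)"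
    unfolding sum_muGa_labelings using start
    by (intro sum_mono2 finite_walks simple_graph_finite[OF G])
      (auto intro!: mult_nonneg_nonneg sum_nonneg walk_weight_nonneg)
  finally show ?thesis
    using card_labelings_pos[OF G \<open>k \<ge> 1\<close>] by (simp add: mubar_def field_simps)
qed

lemma walk_visits_le:
  assumes G: "simple_graph V E" and pos: "\<forall>u\<in>V. deg V E u > 0"
  shows "(\<Sum>p\<in>walks V E q. walk_weight V E p * (if v \<in> set p then 1 else 0)) \<le> (real q + 1) * stationary V E v"
proof -
  have "(\<Sum>p\<in>walks V E q. walk_weight V E p * (if v \<in> set p then 1 else 0)) \<le>
        (\<Sum>p\<in>walks V E q. \<Sum>i\<le>q. walk_weight V E p * (if p ! i = v then 1 else 0))"
  proof (intro sum_mono)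
    fix p assume p: "p \<in> walks V E q"
    have "(if v \<in> set p then 1 else 0) \<le> (\<Sum>i\<le>q. if p ! i = v then 1 else 0 :: real)"
    proof (cases "v \<in> set p")
      case True
      then obtain i where "i \<le> q" "p ! i = v"
        using walksD(1)[OF p] by (auto simp: in_set_conv_nth less_Suc_eq_le)
      then have "(if p ! i = v then 1 else 0 :: real) \<le> (\<Sum>i\<le>q. if p ! i = v then 1 else 0)"
        by (intro member_le_sum) auto
      with True \<open>p ! i = v\<close> show ?thesis
        by simp
    qed (simp add: sum_nonneg)
    then show "walk_weight V E p * (if v \<in> set p then 1 else 0) \<le>
               (\<Sum>i\<le>q. walk_weight V E p * (if p ! i = v then 1 else 0))"
      by (simp add: mult_left_mono walk_weight_nonneg flip: sum_distrib_left)
  qed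
  also have "\<dots> = (\<Sum>i\<le>q. stationary V E v)"
    by (subst sum.swap) (simp add: walk_position_law[OF G pos])
  also have "\<dots> = (real q + 1) * stationary V E v"
    by (simp add: add.commute)
  finally show ?thesis .
qed

text \<open>Two walks can only interact through the labels if they share a vertex; summing over the
  shared vertex and using stationarity bounds the total weight of such pairs.\<close>
lemma sum_overlapping_walks_le:
  assumes G: "simple_graph V E" and pos: "\<forall>u\<in>V. deg V E u > 0"
  shows "(\<Sum>p\<in>walks V E q. \<Sum>p'\<in>walks V E q.
            if oedges V E \<inter> (set p \<times> set p) \<inter> (oedges V E \<inter> (set p' \<times> set p')) = {} then 0
            else walk_weight V E p * walk_weight V E p')
         \<le> (real q + 1)\<^sup>2 * (\<Sum>v\<in>V. (stationary V E v)\<^sup>2)"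
proof -
  let ?w = "walk_weight V E" and ?P = "walks V E q"
  define a where "a p v = (if v \<in> set p then 1 else 0 :: real)" for p :: "nat list" and v
  have fin: "finite V" "finite ?P"
    using simple_graph_finite[OF G] finite_walks by auto
  have "(if oedges V E \<inter> (set p \<times> set p) \<inter> (oedges V E \<inter> (set p' \<times> set p')) = {} then 0 else ?w p * ?w p')
        \<le> (\<Sum>v\<in>V. (?w p * a p v) * (?w p' * a p' v))" if "p \<in> ?P" "p' \<in> ?P" for p p'
  proof (cases "oedges V E \<inter> (set p \<times> set p) \<inter> (oedges V E \<inter> (set p' \<times> set p')) = {}")
    case False
    then obtain x where x: "x \<in> set p" "x \<in> set p'"
      by auto
    then have "x \<in> V"
      using walksD(2)[OF that(1)] by auto
    then have "(?w p * a p x) * (?w p' * a p' x) \<le> (\<Sum>v\<in>V. (?w p * a p v) * (?w p' * a p' v))"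
      by (intro member_le_sum fin) (auto simp: a_def walk_weight_nonneg intro!: mult_nonneg_nonneg)
    with x False show ?thesis
      by (simp add: a_def)
  qed (simp add: a_def sum_nonneg walk_weight_nonneg)
  then have "(\<Sum>p\<in>?P. \<Sum>p'\<in>?P. if oedges V E \<inter> (set p \<times> set p) \<inter> (oedges V E \<inter> (set p' \<times> set p')) = {} then 0 else ?w p * ?w p')
        \<le> (\<Sum>p\<in>?P. \<Sum>p'\<in>?P. \<Sum>v\<in>V. (?w p * a p v) * (?w p' * a p' v))"
    by (intro sum_mono)
  also have "\<dots> = (\<Sum>p\<in>?P. \<Sum>v\<in>V. \<Sum>p'\<in>?P. (?w p * a p v) * (?w p' * a p' v))"
    by (intro sum.cong refl) (rule sum.swap)
  also have "\<dots> = (\<Sum>v\<in>V. \<Sum>p\<in>?P. \<Sum>p'\<in>?P. (?w p * a p v) * (?w p' * a p' v))"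
    by (rule sum.swap)
  also have "\<dots> = (\<Sum>v\<in>V. (\<Sum>p\<in>?P. ?w p * a p v)\<^sup>2)"
    by (simp add: power2_eq_square sum_product)
  also have "\<dots> \<le> (\<Sum>v\<in>V. ((real q + 1) * stationary V E v)\<^sup>2)"
    using walk_visits_le[OF G pos]
    by (intro sum_mono power_mono) (auto simp: a_def intro!: sum_nonneg walk_weight_nonneg)
  finally show ?thesis
    by (simp add: power_mult_distrib sum_distrib_left)
qed

lemma sum_sq_deviation_muGa_le:
  assumes G: "simple_graph V E" and degs: "\<forall>u\<in>V. 3 \<le> deg V E u \<and> deg V E u \<le> d"
    and "V \<noteq> {}" and "k \<ge> 1"
  shows "(\<Sum>\<alpha>\<in>labelings k j V E. (muGa V E \<alpha> q [] y - mubar k j V E q [] y)\<^sup>2)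
         \<le> card (labelings k j V E) * ((real q + 1)\<^sup>2 * (real d ^ 2 / (9 * real (card V))))"
proof -
  have pos: "\<forall>u\<in>V. deg V E u > 0"
    using degs by force
  let ?D = "\<lambda>p. oedges V E \<inter> (set p \<times> set p)"
  have "(\<Sum>\<alpha>\<in>labelings k j V E. (muGa V E \<alpha> q [] y - mubar k j V E q [] y)\<^sup>2)
        \<le> card (labelings k j V E) * (\<Sum>p\<in>walks V E q. \<Sum>p'\<in>walks V E q.
             if ?D p \<inter> ?D p' = {} then 0 else walk_weight V E p * walk_weight V E p')"
    unfolding muGa_def mubar_def labelings_def
  proof (rule sum_sq_deviation_le_overlaps)
    show "finite (oedges V E)" "finite (walks V E q)"
      using G by (simp_all add: finite_oedges finite_walks simple_graph_finite)
    show "words k j \<noteq> {}"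
      using \<open>k \<ge> 1\<close> by (rule words_nonempty)
    show "(if red ([] @ plab \<alpha> p) = y then 1 else 0 :: real) = (if red ([] @ plab \<alpha>' p) = y then 1 else 0)"
      if "p \<in> walks V E q" "\<alpha> \<in> PiE (oedges V E) (\<lambda>_. words k j)" "\<alpha>' \<in> PiE (oedges V E) (\<lambda>_. words k j)"
        "\<forall>e\<in>?D p. \<alpha> e = \<alpha>' e" for p \<alpha> \<alpha>'
      using plab_cong[OF G that(1,4)] by simp
  qed (auto simp: walk_weight_nonneg)
  also have "\<dots> \<le> card (labelings k j V E) * ((real q + 1)\<^sup>2 * (\<Sum>v\<in>V. (stationary V E v)\<^sup>2))"
    using sum_overlapping_walks_le[OF G pos] by (intro mult_left_mono) simp_all
  also have "\<dots> \<le> card (labelings k j V E) * ((real q + 1)\<^sup>2 * (real d ^ 2 / (9 * real (card V))))"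
    using sum_stationary_sq_le[OF G degs \<open>V \<noteq> {}\<close>] by (intro mult_left_mono) simp_all
  finally show ?thesis .
qed

text \<open>Chebyshev's inequality, with the mean bounded below by \<open>mubar_ge\<close> and the variance bounded above
  by \<open>sum_sq_deviation_muGa_le\<close>.\<close>
lemma card_deviating_labelings_le:
  assumes G: "simple_graph V E" and degs: "\<forall>u\<in>V. 3 \<le> deg V E u \<and> deg V E u \<le> d" and "V \<noteq> {}"
    and girth: "\<forall>c. is_cycle V E c \<longrightarrow> q < length c" and "k \<ge> 1"
    and y: "y \<in> red ` words k (q * j)"
  shows "real (card {\<alpha> \<in> labelings k j V E. mubar k j V E q [] y / 2 \<le> \<bar>muGa V E \<alpha> q [] y - mubar k j V E q [] y\<bar>})
    \<le> real (card (labelings k j V E)) * (4 * real d ^ 4 / 81) * (real q + 1)\<^sup>2 * ((real d * real (card (words k j))) ^ q)\<^sup>2 / real (card V)"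
proof -
  let ?\<Omega> = "labelings k j V E" and ?\<mu> = "mubar k j V E q [] y"
  define L where "L = 3 / (real d * (real d * real (card (words k j))) ^ q)"
  define X where "X = real (card ?\<Omega>) * ((real q + 1)\<^sup>2 * (real d ^ 2 / (9 * real (card V))))"
  have "real d \<ge> 3" "real (card V) > 0"
    using degs \<open>V \<noteq> {}\<close> simple_graph_finite[OF G] by (force, simp add: card_gt_0_iff)
  moreover have "real (card (words k j)) \<ge> 1"
    using words_nonempty[OF \<open>k \<ge> 1\<close>] by (simp add: card_gt_0_iff Suc_le_eq)
  ultimately have "L > 0"
    by (simp add: L_def)
  have "L \<le> ?\<mu>"
    unfolding L_def by (rule mubar_ge[OF G degs \<open>V \<noteq> {}\<close> girth \<open>k \<ge> 1\<close> y])
  have "real (card {\<alpha> \<in> ?\<Omega>. ?\<mu> / 2 \<le> \<bar>muGa V E \<alpha> q [] y - ?\<mu>\<bar>}) * (?\<mu> / 2)\<^sup>2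
        \<le> (\<Sum>\<alpha>\<in>?\<Omega>. (muGa V E \<alpha> q [] y - ?\<mu>)\<^sup>2)"
    using \<open>L > 0\<close> \<open>L \<le> ?\<mu>\<close> by (intro chebyshev_card finite_labelings[OF G]) simp
  also have "\<dots> \<le> X"
    unfolding X_def by (rule sum_sq_deviation_muGa_le[OF G degs \<open>V \<noteq> {}\<close> \<open>k \<ge> 1\<close>])
  finally have "real (card {\<alpha> \<in> ?\<Omega>. ?\<mu> / 2 \<le> \<bar>muGa V E \<alpha> q [] y - ?\<mu>\<bar>}) \<le> X / (?\<mu> / 2)\<^sup>2"
    using \<open>L > 0\<close> \<open>L \<le> ?\<mu>\<close> by (simp add: le_divide_eq)
  also have "\<dots> \<le> X / (L / 2)\<^sup>2"
    using \<open>L > 0\<close> \<open>L \<le> ?\<mu>\<close> by (intro divide_left_mono power_mono mult_pos_pos) (auto simp: X_def)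
  also have "\<dots> = real (card ?\<Omega>) * (4 * real d ^ 4 / 81) * (real q + 1)\<^sup>2 *
                 ((real d * real (card (words k j))) ^ q)\<^sup>2 / real (card V)"
    using \<open>real d \<ge> 3\<close> \<open>real (card V) > 0\<close> \<open>real (card (words k j)) \<ge> 1\<close>
    by (simp add: X_def L_def field_simps)
  finally show ?thesis .
qed

text \<open>Unreachable targets have kernel and mean zero, so only reachable ones need to concentrate.\<close>
lemma eff_sim_if_concentrated:
  assumes G: "simple_graph V E" and degs: "\<forall>u\<in>V. 3 \<le> deg V E u \<and> deg V E u \<le> d" and "V \<noteq> {}"
    and "k \<ge> 1" and \<alpha>: "\<alpha> \<in> labelings k j V E" and "1 \<le> Q"
    and conc: "\<forall>q\<in>{1..Q}. \<forall>y\<in>red ` words k (q * j).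
                 \<bar>muGa V E \<alpha> q [] y - mubar k j V E q [] y\<bar> < mubar k j V E q [] y / 2"
    and Q: "\<And>q. 1 \<le> q \<Longrightarrow> real q \<le> q0 \<Longrightarrow> q \<le> Q"
  shows "eff_sim k j V E \<alpha> q0"
proof -
  have pos: "\<forall>u\<in>V. deg V E u > 0"
    using degs by force
  have close: "mubar k j V E q [] y / 2 \<le> muGa V E \<alpha> q [] y \<and> muGa V E \<alpha> q [] y \<le> 2 * mubar k j V E q [] y"
    if "q \<in> {1..Q}" for q y
  proof (cases "y \<in> red ` words k (q * j)")
    case True
    then have "\<bar>muGa V E \<alpha> q [] y - mubar k j V E q [] y\<bar> < mubar k j V E q [] y / 2"
      using conc that by blast
    then show ?thesis
      unfolding abs_less_iff by linarith
  next
    case False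
    then show ?thesis
      using muGa_unreachable[OF G _ False] \<alpha> by (simp add: mubar_def)
  qed
  show ?thesis
    unfolding eff_sim_def
  proof (intro conjI allI impI ballI)
    fix q x x' assume "1 \<le> q \<and> real q \<le> q0" and "x' \<in> FG k"
    then have "q \<in> {1..Q}" "reduced x'"
      using Q by (auto simp: FG_def)
    then show "mubar k j V E q x x' / 2 \<le> muGa V E \<alpha> q x x'"
      using close by (simp add: muGa_translate mubar_translate)
  next
    fix x x' assume "x' \<in> FG k"
    then have "reduced x'"
      by (simp add: FG_def)
    moreover have "mubar k j V E 1 x x' = muX k j x x'"
      by (rule mubar_one_eq_muX[OF G pos \<open>V \<noteq> {}\<close> \<open>k \<ge> 1\<close> \<open>reduced x'\<close>])
    ultimately show "muGa V E \<alpha> 1 x x' \<le> 2 * muX k j x x'"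
      using close[of 1 "red (winv x @ x')"] \<open>1 \<le> Q\<close> by (simp add: muGa_translate mubar_translate)
  qed
qed

section \<open>The failure probability\<close>

lemma fail_prob_le_1: "simple_graph V E \<Longrightarrow> fail_prob k j V E q0 \<le> 1"
  unfolding fail_prob_def
  by (cases "card (labelings k j V E) = 0")
    (simp_all add: card_mono finite_labelings divide_le_eq)

text \<open>At most \<open>|S\<^sup>j|\<^sup>q\<close> targets are reachable at time \<open>q\<close>.\<close>
lemma card_deviating_labelings_at_time_le:
  fixes V :: "nat set" and E :: "nat \<Rightarrow> nat \<Rightarrow> bool" and d k j q :: nat
  defines "B \<equiv> real d ^ 2 * real (card (words k j)) ^ 3"
  assumes G: "simple_graph V E" and degs: "\<forall>u\<in>V. 3 \<le> deg V E u \<and> deg V E u \<le> d" and "V \<noteq> {}"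
    and girth: "\<forall>c. is_cycle V E c \<longrightarrow> q < length c" and "k \<ge> 1"
  shows "real (card (\<Union>y\<in>red ` words k (q * j). {\<alpha> \<in> labelings k j V E.
             mubar k j V E q [] y / 2 \<le> \<bar>muGa V E \<alpha> q [] y - mubar k j V E q [] y\<bar>}))
    \<le> real (card (labelings k j V E)) * (4 * real d ^ 4 / 81) * (real q + 1)\<^sup>2 * B ^ q / real (card V)"
proof -
  let ?\<Omega> = "labelings k j V E" and ?W = "real (card (words k j))" and ?N = "real (card V)"
  define T where "T = real (card ?\<Omega>) * (4 * real d ^ 4 / 81) * (real q + 1)\<^sup>2 * ((real d * ?W) ^ q)\<^sup>2 / ?N"
  have "T \<ge> 0"
    by (simp add: T_def)
  have B_power: "?W ^ q * ((real d * ?W) ^ q)\<^sup>2 = B ^ q"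
    unfolding B_def by (simp add: power_mult_distrib power2_eq_square power3_eq_cube mult_ac)
  have "card (red ` words k (q * j)) \<le> card (words k (q * j))"
    by (rule card_image_le) simp
  also have "\<dots> = card (words k j) ^ q"
    by (simp add: card_words mult.commute[of q j] power_mult)
  finally have targets: "real (card (red ` words k (q * j))) \<le> ?W ^ q"
    by (simp only: of_nat_power[symmetric] of_nat_le_iff)
  have "real (card (\<Union>y\<in>red ` words k (q * j). {\<alpha> \<in> ?\<Omega>.
          mubar k j V E q [] y / 2 \<le> \<bar>muGa V E \<alpha> q [] y - mubar k j V E q [] y\<bar>}))
      \<le> (\<Sum>y\<in>red ` words k (q * j). real (card {\<alpha> \<in> ?\<Omega>.
          mubar k j V E q [] y / 2 \<le> \<bar>muGa V E \<alpha> q [] y - mubar k j V E q [] y\<bar>}))"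
    using card_UN_le[of "red ` words k (q * j)"] of_nat_mono by fastforce
  also have "\<dots> \<le> (\<Sum>y\<in>red ` words k (q * j). T)"
    unfolding T_def
    by (intro sum_mono card_deviating_labelings_le[OF G degs \<open>V \<noteq> {}\<close> girth \<open>k \<ge> 1\<close>])
  also have "\<dots> \<le> ?W ^ q * T"
    using targets \<open>T \<ge> 0\<close> by (simp add: mult_right_mono)
  also have "\<dots> = real (card ?\<Omega>) * (4 * real d ^ 4 / 81) * (real q + 1)\<^sup>2 * B ^ q / ?N"
    unfolding T_def B_power[symmetric] by (simp only: times_divide_eq_right mult_ac)
  finally show ?thesis .
qed

text \<open>Union bound over the times \<open>q \<le> Q\<close>.\<close>
lemma fail_prob_le:
  assumes G: "simple_graph V E" and degs: "\<forall>u\<in>V. 3 \<le> deg V E u \<and> deg V E u \<le> d" and "V \<noteq> {}"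
    and "k \<ge> 1" and "1 \<le> Q" and girth: "\<And>c. is_cycle V E c \<Longrightarrow> Q < length c"
    and Q: "\<And>q. 1 \<le> q \<Longrightarrow> real q \<le> q0 \<Longrightarrow> q \<le> Q"
  shows "fail_prob k j V E q0 \<le>
    4 * real d ^ 4 / 81 * (real Q + 1) ^ 3 * (real d ^ 2 * real (card (words k j)) ^ 3) ^ Q / real (card V)"
proof -
  let ?\<Omega> = "labelings k j V E" and ?W = "real (card (words k j))" and ?N = "real (card V)"
  define Bad where "Bad q y = {\<alpha> \<in> ?\<Omega>. mubar k j V E q [] y / 2 \<le> \<bar>muGa V E \<alpha> q [] y - mubar k j V E q [] y\<bar>}"
    for q y
  define B where "B = real d ^ 2 * ?W ^ 3"
  define M where "M = real (card ?\<Omega>) * (4 * real d ^ 4 / 81) * (real Q + 1)\<^sup>2 * B ^ Q / ?N"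
  have "real d \<ge> 3" "?N > 0" "?W \<ge> 1" "real (card ?\<Omega>) > 0"
    using degs \<open>V \<noteq> {}\<close> simple_graph_finite[OF G] words_nonempty[OF \<open>k \<ge> 1\<close>]
      card_labelings_pos[OF G \<open>k \<ge> 1\<close>]
    by (force, simp_all add: card_gt_0_iff Suc_le_eq)
  then have "1 \<le> real d ^ 2" "1 \<le> ?W ^ 3"
    by simp_all
  then have "B \<ge> 1"
    unfolding B_def using mult_mono[of 1 "real d ^ 2" 1 "?W ^ 3"] by simp
  have bad_q: "real (card (\<Union>y\<in>red ` words k (q * j). Bad q y)) \<le> M" if q: "q \<in> {1..Q}" for q
  proof -
    have "real (card (\<Union>y\<in>red ` words k (q * j). Bad q y)) \<le>
        real (card ?\<Omega>) * (4 * real d ^ 4 / 81) * (real q + 1)\<^sup>2 * B ^ q / ?N"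
      unfolding Bad_def B_def
      by (rule card_deviating_labelings_at_time_le[OF G degs \<open>V \<noteq> {}\<close> _ \<open>k \<ge> 1\<close>])
        (use q girth in force)
    also have "\<dots> \<le> M"
      unfolding M_def using q \<open>B \<ge> 1\<close> \<open>real (card ?\<Omega>) > 0\<close> \<open>?N > 0\<close>
      by (intro divide_right_mono mult_mono power_mono power_increasing) auto
    finally show ?thesis .
  qed
  let ?Bad = "\<Union>q\<in>{1..Q}. \<Union>y\<in>red ` words k (q * j). Bad q y"
  have "{\<alpha> \<in> ?\<Omega>. \<not> eff_sim k j V E \<alpha> q0} \<subseteq> ?Bad"
    using eff_sim_if_concentrated[OF G degs \<open>V \<noteq> {}\<close> \<open>k \<ge> 1\<close> _ \<open>1 \<le> Q\<close> _ Q]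
    by (force simp: Bad_def not_le)
  moreover have "finite ?Bad"
    by (rule finite_subset[OF _ finite_labelings[OF G]]) (auto simp: Bad_def)
  ultimately have "card {\<alpha> \<in> ?\<Omega>. \<not> eff_sim k j V E \<alpha> q0} \<le> card ?Bad"
    by (intro card_mono)
  also have "\<dots> \<le> (\<Sum>q\<in>{1..Q}. card (\<Union>y\<in>red ` words k (q * j). Bad q y))"
    by (rule card_UN_le) simp
  finally have "real (card {\<alpha> \<in> ?\<Omega>. \<not> eff_sim k j V E \<alpha> q0}) \<le>
      (\<Sum>q\<in>{1..Q}. real (card (\<Union>y\<in>red ` words k (q * j). Bad q y)))"
    using of_nat_mono by fastforce
  also have "\<dots> \<le> (\<Sum>q\<in>{1..Q}. M)"
    by (intro sum_mono bad_q)
  also have "\<dots> = real Q * M"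
    by simp
  also have "\<dots> \<le> (real Q + 1) * M"
    using \<open>real (card ?\<Omega>) > 0\<close> \<open>?N > 0\<close> \<open>B \<ge> 1\<close> by (intro mult_right_mono) (auto simp: M_def)
  finally show ?thesis
    using \<open>real (card ?\<Omega>) > 0\<close>
    by (simp add: fail_prob_def M_def B_def divide_le_eq power2_eq_square power3_eq_cube field_simps)
qed

lemma power_le_mult_sqrt:
  fixes B x :: real
  assumes "B \<ge> 1" "x \<ge> 1" "Q = 1 \<or> real Q * ln B \<le> ln x / 2"
  shows "B ^ Q \<le> B * sqrt x"
proof (cases "Q = 1")
  case True
  have "B * 1 \<le> B * sqrt x"
    using assms(1,2) by (intro mult_left_mono) auto
  with True show ?thesis
    by simp
next
  case False
  then have "real Q * ln B \<le> ln x / 2"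
    using assms(3) by blast
  have "B ^ Q = exp (real Q * ln B)"
    using \<open>B \<ge> 1\<close> by (simp add: exp_of_nat_mult)
  also have "\<dots> \<le> exp (ln x / 2)"
    using \<open>real Q * ln B \<le> ln x / 2\<close> by simp
  also have "\<dots> = sqrt x"
    using \<open>x \<ge> 1\<close> by (simp add: powr_def flip: powr_half_sqrt)
  also have "\<dots> \<le> B * sqrt x"
    using \<open>B \<ge> 1\<close> \<open>x \<ge> 1\<close> by (simp add: mult_le_cancel_right1)
  finally show ?thesis .
qed

lemma girth_le: "is_cycle V E c \<Longrightarrow> girth V E \<le> length c"
  unfolding girth_def by (rule Least_le) blast

lemma fail_prob_le_floor:
  fixes q0 :: real
  defines "Q \<equiv> max 1 (nat \<lfloor>q0\<rfloor>)"
  assumes G: "simple_graph V E" and degs: "\<forall>u\<in>V. 3 \<le> deg V E u \<and> deg V E u \<le> d" and "V \<noteq> {}"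
    and "k \<ge> 1" and girth: "\<And>c. is_cycle V E c \<Longrightarrow> q0 < real (length c)"
  shows "fail_prob k j V E q0 \<le>
    4 * real d ^ 4 / 81 * (real Q + 1) ^ 3 * (real d ^ 2 * real (card (words k j)) ^ 3) ^ Q / real (card V)"
proof (rule fail_prob_le[OF G degs \<open>V \<noteq> {}\<close> \<open>k \<ge> 1\<close>])
  show "1 \<le> Q"
    by (simp add: Q_def)
  show "Q < length c" if "is_cycle V E c" for c
  proof (cases "Q = 1")
    case True
    with that show ?thesis
      by (simp add: is_cycle_def)
  next
    case False
    then have "real Q \<le> q0"
      by (simp add: Q_def max_def split: if_splits) linarith
    with girth[OF that] show ?thesis
      by linarith
  qed
  show "q \<le> Q" if "real q \<le> q0" for q
  proof -
    have "int q \<le> \<lfloor>q0\<rfloor>"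
      using that by (simp add: le_floor_iff)
    then show ?thesis
      by (simp add: Q_def)
  qed
qed

text \<open>At time \<open>C' log N\<close> the exponential factor \<open>B\<^sup>Q\<close> of \<open>fail_prob_le_floor\<close> costs at most \<open>\<surd>N\<close>
  because \<open>C' log B \<le> 1/2\<close>, and the time stays below the girth because \<open>C' < C\<close>.\<close>
lemma fail_prob_log_time_le:
  fixes V :: "nat set" and E :: "nat \<Rightarrow> nat \<Rightarrow> bool" and d k j :: nat and C C' :: real
  defines "N \<equiv> real (card V)" and "B \<equiv> real d ^ 2 * real (card (words k j)) ^ 3"
  assumes G: "simple_graph V E" and degs: "\<forall>u\<in>V. 3 \<le> deg V E u \<and> deg V E u \<le> d" and "V \<noteq> {}"
    and "k \<ge> 1" and girth: "C * ln N \<le> real (girth V E)"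
    and "0 < C'" "C' < C" and "C' * ln B \<le> 1 / 2"
  shows "fail_prob k j V E (C' * ln N) \<le> 4 * real d ^ 4 / 81 * B * (2 + C' * ln N) ^ 3 / sqrt N"
proof -
  define Q where "Q = max 1 (nat \<lfloor>C' * ln N\<rfloor>)"
  have "N \<ge> 1"
    using simple_graph_finite[OF G] \<open>V \<noteq> {}\<close> by (simp add: N_def Suc_le_eq card_gt_0_iff)
  then have "ln N \<ge> 0"
    by simp
  have "real d \<ge> 3" "real (card (words k j)) \<ge> 1"
    using degs \<open>V \<noteq> {}\<close> words_nonempty[OF \<open>k \<ge> 1\<close>] by (force, simp add: card_gt_0_iff Suc_le_eq)
  then have "B \<ge> 1"
    unfolding B_def using mult_mono[of 1 "real d ^ 2" 1 "real (card (words k j)) ^ 3"] by simp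
  have Q_log: "real Q \<le> C' * ln N" if "Q \<noteq> 1"
    using that by (simp add: Q_def max_def split: if_splits) linarith
  have below_girth: "C' * ln N < real (length c)" if "is_cycle V E c" for c
  proof (cases "ln N = 0")
    case True
    with that show ?thesis
      by (force simp: is_cycle_def)
  next
    case False
    then have "C' * ln N < C * ln N"
      using \<open>C' < C\<close> \<open>ln N \<ge> 0\<close> by (intro mult_strict_right_mono) auto
    also have "\<dots> \<le> real (length c)"
      using girth girth_le[OF that] by linarith
    finally show ?thesis .
  qed
  have fail: "fail_prob k j V E (C' * ln N) \<le> 4 * real d ^ 4 / 81 * (real Q + 1) ^ 3 * B ^ Q / N"
    unfolding N_def B_def Q_def using below_girth[unfolded N_def]
    by (rule fail_prob_le_floor[OF G degs \<open>V \<noteq> {}\<close> \<open>k \<ge> 1\<close>])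
  have "Q = 1 \<or> real Q * ln B \<le> ln N / 2"
  proof (cases "Q = 1")
    case False
    then have "real Q * ln B \<le> C' * ln N * ln B"
      using Q_log \<open>B \<ge> 1\<close> by (simp add: mult_right_mono)
    also have "\<dots> \<le> ln N / 2"
      using \<open>C' * ln B \<le> 1 / 2\<close> \<open>ln N \<ge> 0\<close> mult_left_mono[of "C' * ln B" "1 / 2" "ln N"]
      by (simp add: mult_ac)
    finally show ?thesis
      by simp
  qed simp
  then have B_power: "B ^ Q \<le> B * sqrt N"
    by (rule power_le_mult_sqrt[OF \<open>B \<ge> 1\<close> \<open>N \<ge> 1\<close>])
  have Q_plus_1: "real Q + 1 \<le> 2 + C' * ln N"
    using Q_log \<open>0 < C'\<close> \<open>ln N \<ge> 0\<close> by (cases "Q = 1") auto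
  note fail
  also have "4 * real d ^ 4 / 81 * (real Q + 1) ^ 3 * B ^ Q / N \<le>
      4 * real d ^ 4 / 81 * (2 + C' * ln N) ^ 3 * (B * sqrt N) / N"
    using B_power Q_plus_1 \<open>B \<ge> 1\<close> \<open>N \<ge> 1\<close> by (intro divide_right_mono mult_mono power_mono) auto
  also have "\<dots> = 4 * real d ^ 4 / 81 * B * (2 + C' * ln N) ^ 3 * sqrt N / (sqrt N * sqrt N)"
    using \<open>N \<ge> 1\<close> by (simp add: mult_ac)
  also have "\<dots> = 4 * real d ^ 4 / 81 * B * (2 + C' * ln N) ^ 3 / sqrt N"
    using \<open>N \<ge> 1\<close> by (subst nonzero_mult_divide_mult_cancel_right) auto
  finally show ?thesis .
qed

lemma capped_polylog_over_sqrt: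
  fixes K c :: real
  defines "\<epsilon> \<equiv> \<lambda>N::nat. if N = 0 then 1 else min 1 (K * (2 + c * ln (real N)) ^ 3 / sqrt (real N))"
  assumes "K \<ge> 0" "c \<ge> 0"
  shows "(\<forall>N. 0 \<le> \<epsilon> N \<and> \<epsilon> N \<le> 1) \<and> \<epsilon> \<longlonglongrightarrow> 0"
proof
  define f where "f n = (2 + c * ln (real n)) ^ 3 / sqrt (real n)" for n :: nat
  have f_nonneg: "f n \<ge> 0" if "n \<ge> 1" for n
    using that assms(3) by (simp add: f_def)
  show "\<forall>N. 0 \<le> \<epsilon> N \<and> \<epsilon> N \<le> 1"
  proof
    fix N
    have "N \<ge> 1 \<Longrightarrow> 0 \<le> K * f N"
      using f_nonneg \<open>K \<ge> 0\<close> by simp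
    then show "0 \<le> \<epsilon> N \<and> \<epsilon> N \<le> 1"
      by (auto simp: \<epsilon>_def f_def)
  qed
  have "(\<lambda>n::nat. (1 + ln (real n)) ^ 3 / sqrt (real n)) \<longlonglongrightarrow> 0"
    by real_asymp
  then have upper_lim: "(\<lambda>n. (2 + c) ^ 3 * ((1 + ln (real n)) ^ 3 / sqrt (real n))) \<longlonglongrightarrow> 0"
    by (rule tendsto_mult_right_zero)
  have upper: "f n \<le> (2 + c) ^ 3 * ((1 + ln (real n)) ^ 3 / sqrt (real n))" if "n \<ge> 1" for n
  proof -
    have "2 + c * ln (real n) \<le> (2 + c) * (1 + ln (real n))" "0 \<le> 2 + c * ln (real n)"
      using that assms(3) by (simp_all add: algebra_simps)
    then have "(2 + c * ln (real n)) ^ 3 \<le> ((2 + c) * (1 + ln (real n))) ^ 3"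
      by (rule power_mono)
    then show ?thesis
      by (simp add: f_def power_mult_distrib divide_right_mono)
  qed
  have "f \<longlonglongrightarrow> 0"
    by (rule tendsto_sandwich[OF _ _ tendsto_const upper_lim])
      (use f_nonneg upper in \<open>auto simp: eventually_sequentially\<close>)
  then have "(\<lambda>n. min 1 (K * f n)) \<longlonglongrightarrow> min 1 0"
    by (intro tendsto_min tendsto_const tendsto_mult_right_zero)
  then have "(\<lambda>n. min 1 (K * f n)) \<longlonglongrightarrow> 0"
    by simp
  then show "\<epsilon> \<longlonglongrightarrow> 0"
    by (rule Lim_transform_eventually) (auto simp: \<epsilon>_def f_def eventually_sequentially intro!: exI[of _ 1])
qed

theorem proposition7p4:
  fixes d k j :: nat and C :: real
  assumes "d \<ge> 3" and "k \<ge> 1" and "j \<ge> 1" and "C > 0"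
  shows "\<exists>C' > 0. \<exists>\<epsilon> :: nat \<Rightarrow> real.
           (\<forall>N. 0 \<le> \<epsilon> N \<and> \<epsilon> N \<le> 1) \<and> \<epsilon> \<longlonglongrightarrow> 0 \<and>
           (\<forall>(V :: nat set) (E :: nat \<Rightarrow> nat \<Rightarrow> bool).
              simple_graph V E \<and>
              (\<forall>u\<in>V. 3 \<le> deg V E u \<and> deg V E u \<le> d) \<and>
              real (girth V E) \<ge> C * ln (real (card V))
              \<longrightarrow> fail_prob k j V E (C' * ln (real (card V))) \<le> \<epsilon> (card V))"
proof -
  \<comment> \<open>The argument works for \<open>j = 0\<close> as well.\<close>
  define B where "B = real d ^ 2 * real (card (words k j)) ^ 3"
  define C' where "C' = min (C / 2) (1 / (2 * ln B))"
  define K where "K = 4 * real d ^ 4 / 81 * B"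
  define \<epsilon> where "\<epsilon> N = (if N = 0 then 1 else min 1 (K * (2 + C' * ln (real N)) ^ 3 / sqrt (real N)))"
    for N :: nat
  have "9 \<le> real d ^ 2" "1 \<le> real (card (words k j)) ^ 3"
    using \<open>d \<ge> 3\<close> power_mono[of 3 "real d" 2] words_nonempty[OF \<open>k \<ge> 1\<close>]
    by (simp_all add: card_gt_0_iff Suc_le_eq)
  then have "B \<ge> 9"
    unfolding B_def using mult_mono[of 9 "real d ^ 2" 1 "real (card (words k j)) ^ 3"] by simp
  then have "ln B > 0" "K \<ge> 0"
    by (simp_all add: K_def)
  then have C': "0 < C'" "C' < C" "C' * ln B \<le> 1 / 2"
    using \<open>C > 0\<close> mult_right_mono[of C' "1 / (2 * ln B)" "ln B"] by (auto simp: C'_def)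
  have "fail_prob k j V E (C' * ln (real (card V))) \<le> \<epsilon> (card V)"
    if "simple_graph V E" "\<forall>u\<in>V. 3 \<le> deg V E u \<and> deg V E u \<le> d" "C * ln (real (card V)) \<le> real (girth V E)"
    for V E
    using fail_prob_le_1[OF that(1)] fail_prob_log_time_le[OF that(1,2) _ \<open>k \<ge> 1\<close> that(3) C'[unfolded B_def]]
      simple_graph_finite[OF that(1)]
    by (cases "V = {}") (auto simp: \<epsilon>_def K_def B_def)
  moreover have "(\<forall>N. 0 \<le> \<epsilon> N \<and> \<epsilon> N \<le> 1) \<and> \<epsilon> \<longlonglongrightarrow> 0"
    unfolding \<epsilon>_def using capped_polylog_over_sqrt[of K C'] \<open>K \<ge> 0\<close> C' by simp
  ultimately show ?thesis
    using \<open>0 < C'\<close> by blast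
qed

end
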